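(* Assume the following hypothesis: for every fixed $\epsilon>0$, $$\sum_{d\le x^{1-\epsilon}}\left|\pi(x;d,1)-\frac{\pi(x)}{\phi(d)}\right| = o(\pi(x)) \quad\text{as } x\to\infty.$$ Fix $U\ge1$. Suppose that $P$ is a set of primes less than $x$ with $\{p\le y\}\subseteq P$, where $y=x^{1/u}$ and $1\le u\le U$. Then $$\frac{\pi(x,P)}{\pi(x)}\sim\frac{\Psi(x,P)}{x}\quad\text{as } x\to\infty.$$
   Context: $\pi(x)$ is the number of primes $\le x$, $\pi(x;d,1)$ the number of primes $p\le x$ with $p\equiv1\pmod d$, $\phi$ is Euler's function. For a set $P$ of primes, $\Psi(x,P)=\#\{n\le x:\ p\mid n\Rightarrow p\in P\}$ and $\pi(x,P)=\#\{p\le x\text{ prime}:\ q\mid p-1\Rightarrow q\in P\}$ ($p,q$ primes). *)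

theory Defs
  imports Complex_Main "HOL-Number_Theory.Number_Theory" "HOL-Library.Landau_Symbols"
begin

definition prime_pi :: "real \<Rightarrow> nat" where
  "prime_pi x = card {p::nat. prime p \<and> real p \<le> x}"

definition prime_pi_ap :: "real \<Rightarrow> nat \<Rightarrow> nat" where
  "prime_pi_ap x d = card {p::nat. prime p \<and> real p \<le> x \<and> [p = 1] (mod d)}"

definition Psi_set :: "real \<Rightarrow> nat set \<Rightarrow> nat" where
  "Psi_set x P = card {n::nat. 1 \<le> n \<and> real n \<le> x \<and> (\<forall>p. prime p \<longrightarrow> p dvd n \<longrightarrow> p \<in> P)}"

definition prime_pi_set :: "real \<Rightarrow> nat set \<Rightarrow> nat" where
  "prime_pi_set x P = card {p::nat. prime p \<and> real p \<le> x \<and>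
      (\<forall>q. prime q \<longrightarrow> q dvd (p - 1) \<longrightarrow> q \<in> P)}"

end

theory Submission
  imports Defs "HOL-Real_Asymp.Real_Asymp"
begin

text \<open>
  Sieve both the shifted primes \<open>p - 1\<close> (\<open>p \<le> x\<close>) and the integers \<open>n \<le> x\<close> by the primes
  \<open>q \<le> x\<close> outside \<open>P\<close>.  These all exceed \<open>z = x\<^sup>1\<^sup>/\<^sup>U\<close>, so a number up to \<open>x\<close> has at most
  \<open>K = \<lceil>U\<rceil>\<close> of them as divisors.  Inclusion--exclusion is truncated at products
  \<open>d \<le> M = x\<^sup>1\<^sup>-\<^sup>\<epsilon>\<close>: there the hypothesis gives \<open>\<pi>(x;d,1) \<approx> \<pi>(x)/\<phi>(d)\<close>, trivially
  \<open>\<lfloor>x/d\<rfloor> \<approx> x/d\<close>, and \<open>1/\<phi>(d) \<approx> 1/d\<close> because the prime factors of \<open>d\<close> are large.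
  The discarded products \<open>d > M\<close> are counted with the weight \<open>\<Lambda>\<^sub>K(d)/(log z)\<^sup>K \<ge> 1\<close>, where
  \<open>\<Lambda>\<^sub>K = \<mu> * log\<^sup>K\<close>.  As \<open>\<Sum>\<^bsub>d | n\<^esub> \<Lambda>\<^sub>K(d) = (log n)\<^sup>K\<close> and
  \<open>\<Sum>\<^bsub>d \<le> M\<^esub> \<Lambda>\<^sub>K(d)/d \<approx> (log M)\<^sup>K = (1 - \<epsilon>)\<^sup>K (log x)\<^sup>K\<close>, the divisors above \<open>M\<close>
  carry only a fraction \<open>1 - (1 - \<epsilon>)\<^sup>K\<close> of the total weight, which is small for small \<open>\<epsilon>\<close>.
  Finally \<open>\<Psi>(x,P) \<ge> c(U) x\<close> by a Chebyshev-type lower bound for smooth numbers, which turns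
  the absolute error into a relative one.
\<close>

section \<open>Generalised von Mangoldt functions\<close>

text \<open>\<open>gen_mangoldt k\<close> is \<open>\<Lambda>\<^sub>k = \<mu> * log\<^sup>k\<close>, defined through the recursion
  \<open>\<Lambda>\<^sub>k\<^sub>+\<^sub>1 = \<Lambda>\<^sub>k log + \<Lambda> * \<Lambda>\<^sub>k\<close> (Dirichlet convolution).\<close>

fun gen_mangoldt :: "nat \<Rightarrow> nat \<Rightarrow> real" where
  "gen_mangoldt 0 n = (if n = 1 then 1 else 0)"
| "gen_mangoldt (Suc k) n =
     gen_mangoldt k n * ln (real n) + (\<Sum>d | d dvd n. mangoldt d * gen_mangoldt k (n div d))"

lemma gen_mangoldt_at_0 [simp]: "gen_mangoldt k 0 = 0"
  by (induction k) auto

lemma gen_mangoldt_nonneg: "gen_mangoldt k n \<ge> 0"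
proof (induction k arbitrary: n)
  case (Suc k)
  have "gen_mangoldt k n * ln (real n) \<ge> 0"
    using Suc by (cases "n = 0") (auto intro: mult_nonneg_nonneg)
  moreover have "(\<Sum>d | d dvd n. mangoldt d * gen_mangoldt k (n div d)) \<ge> 0"
    by (intro sum_nonneg mult_nonneg_nonneg mangoldt_nonneg Suc)
  ultimately show ?case by simp
qed simp

lemma sum_divisors_divisors_swap:
  fixes f :: "nat \<Rightarrow> nat \<Rightarrow> real"
  assumes "n > 0"
  shows "(\<Sum>d | d dvd n. \<Sum>a | a dvd d. f a (d div a)) = (\<Sum>b | b dvd n. \<Sum>a | a dvd n div b. f a b)"
proof -
  have fin: "finite {d. d dvd n}" using assms by simp
  have "(\<Sum>d | d dvd n. \<Sum>a | a dvd d. f a (d div a)) =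
        (\<Sum>(d,a) \<in> Sigma {d. d dvd n} (\<lambda>d. {a. a dvd d}). f a (d div a))"
    using fin assms by (subst sum.Sigma) (auto intro: finite_divisors_nat)
  also have "\<dots> = (\<Sum>(b,a) \<in> Sigma {b. b dvd n} (\<lambda>b. {a. a dvd n div b}). f a b)"
  proof (rule sum.reindex_bij_witness[where i = "\<lambda>(b,a). (a*b, a)" and j = "\<lambda>(d,a). (d div a, a)"])
    fix ba assume "ba \<in> Sigma {b. b dvd n} (\<lambda>b. {a. a dvd n div b})"
    then obtain b a where "ba = (b,a)" "b dvd n" "a dvd n div b" by auto
    then obtain c where ba: "ba = (b,a)" "n = b * c" "a dvd c"
      using assms by (auto elim!: dvdE)
    with assms show "(case case ba of (b, a) \<Rightarrow> (a * b, a) of (d, a) \<Rightarrow> (d div a, a)) = ba"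
      by (auto elim!: dvdE)
    from ba assms show "(case ba of (b, a) \<Rightarrow> (a * b, a)) \<in> Sigma {d. d dvd n} (\<lambda>d. {a. a dvd d})"
      by (auto simp: mult.commute mult_dvd_mono)
  next
    fix da assume "da \<in> Sigma {d. d dvd n} (\<lambda>d. {a. a dvd d})"
    then obtain a e c where da: "da = (a * e, a)" "n = a * e * c"
      by (auto elim!: dvdE)
    with assms show "(case case da of (d, a) \<Rightarrow> (d div a, a) of (b, a) \<Rightarrow> (a * b, a)) = da"
      by auto
    from da assms show "(case da of (d, a) \<Rightarrow> (d div a, a)) \<in> Sigma {b. b dvd n} (\<lambda>b. {a. a dvd n div b})"
      by (auto simp: mult.commute mult.left_commute)
    from da assms show "(case case da of (d, a) \<Rightarrow> (d div a, a) of (b, a) \<Rightarrow> f a b) = (case da of (d, a) \<Rightarrow> f a (d div a))"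
      by auto
  qed
  also have "\<dots> = (\<Sum>b | b dvd n. \<Sum>a | a dvd n div b. f a b)"
    using fin assms by (subst sum.Sigma) (auto intro!: finite_divisors_nat elim!: dvdE)
  finally show ?thesis .
qed

lemma sum_gen_mangoldt_divisors:
  assumes "n > 0"
  shows "(\<Sum>d | d dvd n. gen_mangoldt k d) = ln (real n) ^ k"
  using assms
proof (induction k arbitrary: n)
  case 0
  then show ?case by (simp add: sum.delta)
next
  case (Suc k)
  have convolution: "(\<Sum>d | d dvd n. \<Sum>a | a dvd d. mangoldt a * gen_mangoldt k (d div a)) =
        (\<Sum>b | b dvd n. gen_mangoldt k b * ln (real (n div b)))"
  proof -
    have "(\<Sum>d | d dvd n. \<Sum>a | a dvd d. mangoldt a * gen_mangoldt k (d div a)) =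
          (\<Sum>b | b dvd n. (\<Sum>a | a dvd n div b. mangoldt a) * gen_mangoldt k b)"
      using sum_divisors_divisors_swap[OF Suc.prems, of "\<lambda>a b. mangoldt a * gen_mangoldt k b"]
      by (simp add: sum_distrib_right)
    also have "\<dots> = (\<Sum>b | b dvd n. gen_mangoldt k b * ln (real (n div b)))"
      using Suc.prems by (intro sum.cong refl) (auto simp: mangoldt_sum elim!: dvdE)
    finally show ?thesis .
  qed
  have "(\<Sum>d | d dvd n. gen_mangoldt (Suc k) d) =
        (\<Sum>d | d dvd n. gen_mangoldt k d * (ln (real d) + ln (real (n div d))))"
    by (simp add: sum.distrib convolution distrib_left)
  also have "\<dots> = (\<Sum>d | d dvd n. gen_mangoldt k d * ln (real n))"
    using Suc.prems by (intro sum.cong refl) (auto simp: ln_mult elim!: dvdE)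
  also have "\<dots> = ln (real n) ^ Suc k"
    using Suc.IH[OF Suc.prems] by (simp add: sum_distrib_right[symmetric])
  finally show ?case .
qed

lemma gen_mangoldt_le_ln_power:
  assumes "n > 0"
  shows "gen_mangoldt k n \<le> ln (real n) ^ k"
proof -
  have "gen_mangoldt k n \<le> (\<Sum>d | d dvd n. gen_mangoldt k d)"
    using assms by (intro member_le_sum) (auto simp: gen_mangoldt_nonneg)
  then show ?thesis using sum_gen_mangoldt_divisors[OF assms] by simp
qed

lemma sum_gen_mangoldt_large_divisors:
  assumes "n > 0"
  shows "(\<Sum>d | d dvd n \<and> M < d. gen_mangoldt k d) =
         ln (real n) ^ k - (\<Sum>e\<in>{1..M}. if e dvd n then gen_mangoldt k e else 0)"
proof -
  have pos: "d \<ge> 1" if "d dvd n" for d using that assms by (cases d) auto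
  have split: "{d. d dvd n} = {d. d dvd n \<and> M < d} \<union> {e\<in>{1..M}. e dvd n}"
    using pos by (auto simp: not_less)
  have fin: "finite {d. d dvd n \<and> M < d}"
    using assms by (rule finite_subset[rotated, OF finite_divisors_nat]) auto
  have "ln (real n) ^ k = (\<Sum>d | d dvd n. gen_mangoldt k d)"
    using assms by (rule sum_gen_mangoldt_divisors[symmetric])
  also have "\<dots> = (\<Sum>d | d dvd n \<and> M < d. gen_mangoldt k d) + (\<Sum>e\<in>{e\<in>{1..M}. e dvd n}. gen_mangoldt k e)"
    unfolding split using fin by (intro sum.union_disjoint) auto
  also have "(\<Sum>e\<in>{e\<in>{1..M}. e dvd n}. gen_mangoldt k e) = (\<Sum>e\<in>{1..M}. if e dvd n then gen_mangoldt k e else 0)"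
    by (rule sum.inter_filter) simp
  finally show ?thesis by simp
qed

lemma gen_mangoldt_Suc_ge_mult_ln: "gen_mangoldt k n * ln (real n) \<le> gen_mangoldt (Suc k) n"
proof -
  have "(\<Sum>d | d dvd n. mangoldt d * gen_mangoldt k (n div d)) \<ge> 0"
    by (intro sum_nonneg mult_nonneg_nonneg mangoldt_nonneg gen_mangoldt_nonneg)
  then show ?thesis by simp
qed

lemma gen_mangoldt_Suc_ge_prime_power:
  assumes "prime q" "q dvd n" "n > 0"
  shows "ln (real q) * gen_mangoldt k (n div q ^ multiplicity q n) \<le> gen_mangoldt (Suc k) n"
proof -
  have "mangoldt (q ^ multiplicity q n) = ln (real q)"
    using assms by (simp add: mangoldt_primepow prime_multiplicity_gt_zero_iff)
  moreover have "mangoldt (q ^ multiplicity q n) * gen_mangoldt k (n div q ^ multiplicity q n) \<le>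
                 (\<Sum>d | d dvd n. mangoldt d * gen_mangoldt k (n div d))"
    using assms multiplicity_dvd[of q n]
    by (intro member_le_sum mult_nonneg_nonneg mangoldt_nonneg gen_mangoldt_nonneg) auto
  moreover have "gen_mangoldt k n * ln (real n) \<ge> 0"
    using assms by (intro mult_nonneg_nonneg gen_mangoldt_nonneg) auto
  ultimately show ?thesis by simp
qed

lemma prime_factors_div_prime_power:
  fixes q n :: nat
  assumes "prime q" "n > 0"
  shows "prime_factors (n div q ^ multiplicity q n) = prime_factors n - {q}"
proof -
  define b where "b = n div q ^ multiplicity q n"
  have n: "n = q ^ multiplicity q n * b"
    unfolding b_def by (simp add: multiplicity_dvd)
  have "\<not> q dvd b"
    unfolding b_def using assms by (intro multiplicity_decompose) auto
  moreover have "p dvd b" if "prime p" "p dvd n" "p \<noteq> q" for p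
    using that assms n by (metis prime_dvd_mult_iff prime_dvd_power primes_dvd_imp_eq)
  moreover have "b \<noteq> 0" using assms(2) n by (metis mult_0_right less_irrefl)
  ultimately show ?thesis
    unfolding b_def[symmetric] using assms(2) n
    by (auto simp: in_prime_factors_iff) (metis dvd_mult)+
qed

lemma gen_mangoldt_ge_ln_power:
  assumes "z \<ge> 1" "n > 1" "\<And>p. p \<in> prime_factors n \<Longrightarrow> real p \<ge> z"
    and "card (prime_factors n) \<le> k"
  shows "gen_mangoldt k n \<ge> ln z ^ k"
  using assms(2-4)
proof (induction k arbitrary: n)
  case 0
  then have "prime_factors n \<noteq> {}"
    by (auto simp: prime_factorization_empty_iff)
  then show ?case using 0 by (simp add: card_gt_0_iff[symmetric])
next
  case (Suc k)
  obtain q where q: "prime q" "q dvd n" using prime_factor_nat[of n] Suc.prems by auto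
  then have q_in: "q \<in> prime_factors n" using Suc.prems by (auto simp: in_prime_factors_iff)
  then have lnq: "ln z \<le> ln (real q)" "0 \<le> ln z"
    using Suc.prems(2) assms(1) by fastforce+
  show ?case
  proof (cases "card (prime_factors n) \<le> k")
    case True
    have "ln (real q) \<le> ln (real n)" using q Suc.prems by (simp add: dvd_imp_le prime_gt_0_nat)
    then have "ln z ^ k * ln z \<le> gen_mangoldt k n * ln (real n)"
      using Suc.IH[OF Suc.prems(1,2) True] lnq by (intro mult_mono) (auto simp: gen_mangoldt_nonneg)
    then show ?thesis using gen_mangoldt_Suc_ge_mult_ln[of k n] by (simp add: mult.commute)
  next
    case False
    define b where "b = n div q ^ multiplicity q n"
    have pf_b: "prime_factors b = prime_factors n - {q}"
      unfolding b_def using q Suc.prems by (intro prime_factors_div_prime_power) auto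
    have card_b: "card (prime_factors b) = k"
      using False Suc.prems(3) pf_b q_in by simp
    have "n = q ^ multiplicity q n * b" unfolding b_def by (simp add: multiplicity_dvd)
    then have "b > 0" using Suc.prems(1) by (cases b) auto
    have "ln z ^ k \<le> gen_mangoldt k b"
    proof (cases "b = 1")
      case True
      then show ?thesis using card_b by simp
    next
      case False
      with \<open>b > 0\<close> show ?thesis using Suc.IH[of b] Suc.prems(2) pf_b card_b by auto
    qed
    then have "ln z * ln z ^ k \<le> ln (real q) * gen_mangoldt k b"
      using lnq by (intro mult_mono) auto
    also have "\<dots> \<le> gen_mangoldt (Suc k) n"
      unfolding b_def using q Suc.prems by (intro gen_mangoldt_Suc_ge_prime_power) auto
    finally show ?thesis by simp
  qed
qed

declare gen_mangoldt.simps(2) [simp del]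

section \<open>Divisor sums and inclusion--exclusion\<close>

lemma card_multiples_atLeastAtMost:
  fixes d M :: nat
  assumes "d > 0"
  shows "card {n\<in>{1..M}. d dvd n} = M div d"
proof -
  have "{n\<in>{1..M}. d dvd n} = (\<lambda>k. d * k) ` {1..M div d}"
  proof (rule Set.set_eqI)
    fix n show "n \<in> {n\<in>{1..M}. d dvd n} \<longleftrightarrow> n \<in> (\<lambda>k. d * k) ` {1..M div d}"
    proof
      assume "n \<in> {n\<in>{1..M}. d dvd n}"
      then obtain k where k: "n = d * k" "1 \<le> n" "n \<le> M" by (auto elim!: dvdE)
      then have "k \<ge> 1" by (cases k) auto
      moreover have "k \<le> M div d" using k assms by (simp add: less_eq_div_iff_mult_less_eq mult.commute)
      ultimately show "n \<in> (\<lambda>k. d * k) ` {1..M div d}" using k by auto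
    next
      assume "n \<in> (\<lambda>k. d * k) ` {1..M div d}"
      then obtain k where k0: "n = d * k" "k \<in> {1..M div d}" by (rule imageE)
      then have k: "n = d * k" "1 \<le> k" "k \<le> M div d" by auto
      then have "d * k \<le> M" using assms by (simp add: less_eq_div_iff_mult_less_eq mult.commute)
      moreover have "1 \<le> d * k" using k assms by simp
      ultimately show "n \<in> {n\<in>{1..M}. d dvd n}" using k by auto
    qed
  qed
  also have "card \<dots> = card {1..M div d}"
    using assms by (intro card_image) (auto simp: inj_on_def)
  finally show ?thesis by simp
qed

lemma sum_card_filter_swap:
  assumes "finite A" "finite B"
  shows "(\<Sum>a\<in>A. card {b\<in>B. R a b}) = (\<Sum>b\<in>B. card {a\<in>A. R a b})"
proof -
  have "(\<Sum>a\<in>A. card {b\<in>B. R a b}) = (\<Sum>a\<in>A. \<Sum>b\<in>B. if R a b then 1 else 0)"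
    using assms by (simp add: sum.inter_filter[symmetric])
  also have "\<dots> = (\<Sum>b\<in>B. \<Sum>a\<in>A. if R a b then 1 else 0)" by (rule sum.swap)
  also have "\<dots> = (\<Sum>b\<in>B. card {a\<in>A. R a b})"
    using assms by (simp add: sum.inter_filter[symmetric])
  finally show ?thesis .
qed

lemma sum_dvd_indicator_swap:
  fixes f :: "nat \<Rightarrow> real"
  assumes "finite A" "finite E"
  shows "(\<Sum>n\<in>A. \<Sum>d\<in>E. if d dvd g n then f d else 0) = (\<Sum>d\<in>E. f d * real (card {n\<in>A. d dvd g n}))"
  using assms by (subst sum.swap) (simp add: sum.inter_filter[symmetric] mult.commute)

lemma sum_divisors_eq_sum_dvd_within:
  fixes f :: "nat \<Rightarrow> real"
  assumes "m > 0" "finite E" "\<And>d. d dvd m \<Longrightarrow> d \<in> E"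
  shows "(\<Sum>d | d dvd m. f d) = (\<Sum>d\<in>E. if d dvd m then f d else 0)"
proof -
  have "(\<Sum>d\<in>E. if d dvd m then f d else 0) = (\<Sum>d\<in>{d\<in>E. d dvd m}. f d)"
    using assms by (simp add: sum.inter_filter)
  also have "{d\<in>E. d dvd m} = {d. d dvd m}" using assms by auto
  finally show ?thesis by simp
qed

lemma sum_Pow_minus_one_power:
  assumes "finite S"
  shows "(\<Sum>T\<in>Pow S. (-1::real) ^ card T) = (if S = {} then 1 else 0)"
proof -
  have "(\<Prod>x\<in>S. (1::real) - 1) = (\<Sum>X\<in>Pow S. (-1) ^ card X * (\<Prod>x\<in>X. 1) * (\<Prod>x\<in>S-X. 1))"
    by (rule prod_diff_conv_sum[OF assms])
  moreover have "S \<noteq> {} \<Longrightarrow> (0::real) ^ card S = 0" using assms by (simp add: card_gt_0_iff)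
  ultimately show ?thesis using assms by auto
qed

lemma prod_primes_dvd_iff:
  fixes T :: "nat set"
  assumes "finite T" "\<And>q. q \<in> T \<Longrightarrow> prime q"
  shows "\<Prod>T dvd m \<longleftrightarrow> (\<forall>q\<in>T. q dvd m)"
proof
  show "\<Prod>T dvd m \<Longrightarrow> \<forall>q\<in>T. q dvd m"
    using assms(1) by (auto intro: dvd_trans[OF dvd_prodI])
  show "\<forall>q\<in>T. q dvd m \<Longrightarrow> \<Prod>T dvd m"
    using assms
  proof (induction T rule: finite_induct)
    case (insert q T)
    have "\<not> q dvd \<Prod>T"
    proof
      assume "q dvd \<Prod>T"
      then obtain r where "r \<in> T" "q dvd r" using insert by (auto simp: prime_dvd_prod_iff)
      then show False using insert by (metis insertCI primes_dvd_imp_eq)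
    qed
    then have "coprime q (\<Prod>T)" using insert.prems by (simp add: prime_imp_coprime)
    with insert show ?case by (simp add: divides_mult)
  qed simp
qed

lemma prime_factors_prod_primes:
  fixes T :: "nat set"
  assumes "finite T" "\<And>q. q \<in> T \<Longrightarrow> prime q"
  shows "prime_factors (\<Prod>T) = T"
proof -
  have "0 \<notin> T" using assms(2)[of 0] by auto
  then have "prime_factors (\<Prod>T) = \<Union>((prime_factors \<circ> (\<lambda>x. x)) ` T)"
    using prime_factors_prod[OF assms(1), of "\<lambda>x. x"] by simp
  also have "\<dots> = T" using assms by (auto simp: prime_factorization_prime)
  finally show ?thesis .
qed

lemma inj_on_prod_primes:
  assumes "finite N" "\<And>q. q \<in> N \<Longrightarrow> prime (q::nat)"
  shows "inj_on (\<lambda>T. \<Prod>T) (Pow N)"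
proof (rule inj_onI)
  fix S T assume "S \<in> Pow N" "T \<in> Pow N" "\<Prod>S = \<Prod>T"
  then show "S = T" using assms prime_factors_prod_primes[of S] prime_factors_prod_primes[of T]
    by (metis PowD finite_subset subsetD)
qed

lemma card_sifted_incl_excl:
  fixes g :: "'a \<Rightarrow> nat"
  assumes "finite A" "finite N" "\<And>q. q \<in> N \<Longrightarrow> prime q"
  shows "real (card {a\<in>A. \<forall>q\<in>N. \<not> q dvd g a}) =
         (\<Sum>T\<in>Pow N. (-1) ^ card T * real (card {a\<in>A. \<Prod>T dvd g a}))"
proof -
  have inner: "(\<Sum>T\<in>Pow N. if \<Prod>T dvd g a then (-1::real) ^ card T else 0) =
               (if \<forall>q\<in>N. \<not> q dvd g a then 1 else 0)" for a
  proof -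
    have "(\<Sum>T\<in>Pow N. if \<Prod>T dvd g a then (-1::real) ^ card T else 0) =
          (\<Sum>T\<in>Pow N. if T \<subseteq> {q. q dvd g a} then (-1::real) ^ card T else 0)"
    proof (intro sum.cong refl)
      fix T assume "T \<in> Pow N"
      then have "\<Prod>T dvd g a \<longleftrightarrow> T \<subseteq> {q. q dvd g a}"
        using assms by (subst prod_primes_dvd_iff) (auto intro: finite_subset)
      then show "(if \<Prod>T dvd g a then (-1::real) ^ card T else 0) =
                 (if T \<subseteq> {q. q dvd g a} then (-1::real) ^ card T else 0)" by simp
    qed
    also have "\<dots> = (\<Sum>T\<in>{T\<in>Pow N. T \<subseteq> {q. q dvd g a}}. (-1::real) ^ card T)"
      by (rule sum.inter_filter[symmetric]) (simp add: assms(2))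
    also have "{T\<in>Pow N. T \<subseteq> {q. q dvd g a}} = Pow (N \<inter> {q. q dvd g a})" by auto
    also have "(\<Sum>T\<in>Pow (N \<inter> {q. q dvd g a}). (-1::real) ^ card T) =
               (if \<forall>q\<in>N. \<not> q dvd g a then 1 else 0)"
      using assms by (subst sum_Pow_minus_one_power) auto
    finally show ?thesis .
  qed
  have "(\<Sum>T\<in>Pow N. (-1) ^ card T * real (card {a\<in>A. \<Prod>T dvd g a})) =
        (\<Sum>T\<in>Pow N. \<Sum>a\<in>A. if \<Prod>T dvd g a then (-1) ^ card T else 0)"
    using assms by (intro sum.cong refl) (simp add: sum.inter_filter[symmetric] mult.commute)
  also have "\<dots> = (\<Sum>a\<in>A. if \<forall>q\<in>N. \<not> q dvd g a then 1 else 0)"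
    by (subst sum.swap) (simp add: inner)
  also have "\<dots> = real (card {a\<in>A. \<forall>q\<in>N. \<not> q dvd g a})"
    using assms by (simp add: sum.inter_filter[symmetric])
  finally show ?thesis by simp
qed

lemma real_nat_floor_ge_half:
  assumes "t \<ge> (1::real)"
  shows "real (nat \<lfloor>t\<rfloor>) \<ge> t / 2"
proof -
  have "real (nat \<lfloor>t\<rfloor>) = real_of_int \<lfloor>t\<rfloor>" using assms by simp
  moreover have "real_of_int \<lfloor>t\<rfloor> > t - 1" using real_of_int_floor_add_one_gt[of t] by linarith
  moreover have "real_of_int \<lfloor>t\<rfloor> \<ge> 1" using assms by simp
  ultimately show ?thesis by linarith
qed

lemma real_le_of_le_nat_floor:
  assumes "n \<le> nat \<lfloor>t\<rfloor>" "t \<ge> 0"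
  shows "real n \<le> t"
proof -
  have "real n \<le> real (nat \<lfloor>t\<rfloor>)" using assms(1) by (simp only: of_nat_le_iff)
  also have "\<dots> \<le> t" using assms by (simp add: of_nat_floor)
  finally show ?thesis .
qed

lemma nat_floor_div_approx:
  assumes "d \<ge> 1" "x \<ge> 0"
  shows "\<bar>real (nat \<lfloor>x\<rfloor> div d) - x / real d\<bar> \<le> 1"
proof -
  define m where "m = nat \<lfloor>x\<rfloor>"
  have m_le: "real m \<le> x" and m_gt: "real m > x - 1"
    unfolding m_def using assms real_of_int_floor_add_one_gt[of x] by (simp_all add: of_nat_floor)
  have "real (m div d) * real d \<le> real m"
    by (metis div_times_less_eq_dividend of_nat_le_iff of_nat_mult)
  then have up: "real (m div d) \<le> x / real d" using assms m_le by (simp add: le_divide_eq)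
  have "m + 1 \<le> m div d * d + d"
    using assms mod_less_divisor[of d m] div_mult_mod_eq[of m d] by linarith
  then have "real m + 1 \<le> real (m div d) * real d + real d"
    by (metis of_nat_add of_nat_le_iff of_nat_mult of_nat_1)
  then have "x / real d - 1 < real (m div d)"
    using m_gt assms by (simp add: field_simps)
  then show ?thesis using up unfolding m_def by linarith
qed

lemma sum_inverse_le_1_plus_ln:
  assumes "M \<ge> 1"
  shows "(\<Sum>d\<in>{1..M}. 1 / real d) \<le> 1 + ln (real M)"
  using assms
proof (induction M rule: dec_induct)
  case (step n)
  have "ln (real n / real (Suc n)) \<le> real n / real (Suc n) - 1"
    using step by (intro ln_le_minus_one) auto
  also have "\<dots> = - 1 / real (Suc n)" by (simp add: field_simps)
  finally have "1 / real (Suc n) \<le> ln (real (Suc n)) - ln (real n)"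
    using step by (simp add: ln_div)
  then show ?case using step by simp
qed simp

lemma one_minus_powers_ge:
  fixes a b :: real
  assumes "0 \<le> a" "a \<le> 1" "0 \<le> b" "b \<le> 1"
  shows "(1 - a) ^ m * (1 - b) ^ n \<ge> 1 - real m * a - real n * b"
proof -
  have p: "(1 - a) ^ m \<ge> 1 - real m * a" "(1 - a) ^ m \<le> 1"
    using assms Bernoulli_inequality[of "-a" m] by (auto intro: power_le_one)
  have q: "(1 - b) ^ n \<ge> 1 - real n * b" "(1 - b) ^ n \<le> 1"
    using assms Bernoulli_inequality[of "-b" n] by (auto intro: power_le_one)
  have "(1 - (1 - a) ^ m) * (1 - (1 - b) ^ n) \<ge> 0" using p q by simp
  then show ?thesis using p q by (simp add: algebra_simps)
qed

lemma prod_one_minus_ge_one_minus_sum: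
  fixes a :: "'a \<Rightarrow> real"
  assumes "finite A" "\<And>i. i \<in> A \<Longrightarrow> 0 \<le> a i \<and> a i \<le> 1"
  shows "(\<Prod>i\<in>A. 1 - a i) \<ge> 1 - (\<Sum>i\<in>A. a i)"
  using assms
proof (induction A rule: finite_induct)
  case (insert j A)
  have "(1 - a j) * (1 - (\<Sum>i\<in>A. a i)) \<le> (1 - a j) * (\<Prod>i\<in>A. 1 - a i)"
    using insert by (intro mult_left_mono) auto
  moreover have "(1 - a j) * (1 - (\<Sum>i\<in>A. a i)) \<ge> 1 - (a j + (\<Sum>i\<in>A. a i))"
    using insert by (simp add: algebra_simps sum_nonneg)
  ultimately show ?case using insert by simp
qed simp

section \<open>Sums of powers of logarithms\<close>

lemma sum_ln_power_eq_sum_gen_mangoldt: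
  "(\<Sum>m\<in>{1..M}. ln (real m) ^ k) = (\<Sum>e\<in>{1..M}. gen_mangoldt k e * real (M div e))"
proof -
  have "(\<Sum>m\<in>{1..M}. ln (real m) ^ k) = (\<Sum>m\<in>{1..M}. \<Sum>e\<in>{1..M}. if e dvd m then gen_mangoldt k e else 0)"
  proof (rule sum.cong[OF refl])
    fix m assume m: "m \<in> {1..M}"
    then have "ln (real m) ^ k = (\<Sum>d | d dvd m. gen_mangoldt k d)"
      by (simp add: sum_gen_mangoldt_divisors)
    also have "\<dots> = (\<Sum>e\<in>{1..M}. if e dvd m then gen_mangoldt k e else 0)"
      using m by (intro sum_divisors_eq_sum_dvd_within) (auto dest: dvd_imp_le intro: Suc_leI)
    finally show "ln (real m) ^ k = (\<Sum>e\<in>{1..M}. if e dvd m then gen_mangoldt k e else 0)" .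
  qed
  also have "\<dots> = (\<Sum>e\<in>{1..M}. gen_mangoldt k e * real (card {m\<in>{1..M}. e dvd id m}))"
    using sum_dvd_indicator_swap[of "{1..M}" "{1..M}" id "gen_mangoldt k"] by simp
  also have "\<dots> = (\<Sum>e\<in>{1..M}. gen_mangoldt k e * real (M div e))"
  proof (rule sum.cong[OF refl])
    fix e assume "e \<in> {1..M}"
    then have "card {m\<in>{1..M}. e dvd m} = M div e" by (intro card_multiples_atLeastAtMost) auto
    then show "gen_mangoldt k e * real (card {m\<in>{1..M}. e dvd id m}) = gen_mangoldt k e * real (M div e)"
      by simp
  qed
  finally show ?thesis .
qed

lemma sum_ln_power_le_sum_gen_mangoldt:
  "(\<Sum>m\<in>{1..M}. ln (real m) ^ k) \<le> real M * (\<Sum>e\<in>{1..M}. gen_mangoldt k e / real e)"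
proof -
  have "(\<Sum>e\<in>{1..M}. gen_mangoldt k e * real (M div e)) \<le> (\<Sum>e\<in>{1..M}. gen_mangoldt k e * (real M / real e))"
    by (intro sum_mono mult_left_mono gen_mangoldt_nonneg of_nat_div_le_of_nat)
  also have "\<dots> = real M * (\<Sum>e\<in>{1..M}. gen_mangoldt k e / real e)"
    by (simp add: sum_distrib_left mult_ac)
  finally show ?thesis using sum_ln_power_eq_sum_gen_mangoldt by simp
qed

lemma sum_gen_mangoldt_div_le:
  assumes "M > 0"
  shows "(\<Sum>e\<in>{1..M}. gen_mangoldt k e / real e) \<le> 2 * ln (real M) ^ k"
proof -
  have "real M * (\<Sum>e\<in>{1..M}. gen_mangoldt k e / real e) = (\<Sum>e\<in>{1..M}. gen_mangoldt k e * (real M / real e))"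
    by (simp add: sum_distrib_left mult_ac)
  also have "\<dots> \<le> (\<Sum>e\<in>{1..M}. gen_mangoldt k e * (real (M div e) + 1))"
  proof (intro sum_mono mult_left_mono gen_mangoldt_nonneg)
    fix e assume e: "e \<in> {1..M}"
    have "M mod e < e" using e by simp
    then have "M \<le> M div e * e + e" using div_mult_mod_eq[of M e] by linarith
    then have "real M \<le> real (M div e) * real e + real e"
      by (metis of_nat_add of_nat_le_iff of_nat_mult)
    then show "real M / real e \<le> real (M div e) + 1" using e by (simp add: field_simps)
  qed
  also have "\<dots> = (\<Sum>e\<in>{1..M}. gen_mangoldt k e * real (M div e)) + (\<Sum>e\<in>{1..M}. gen_mangoldt k e)"
    by (simp add: algebra_simps sum.distrib)
  also have "\<dots> \<le> (\<Sum>m\<in>{1..M}. ln (real M) ^ k) + (\<Sum>e\<in>{1..M}. ln (real M) ^ k)"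
    unfolding sum_ln_power_eq_sum_gen_mangoldt[symmetric]
    by (intro add_mono sum_mono order.trans[OF gen_mangoldt_le_ln_power] power_mono) auto
  finally show ?thesis using assms by (simp add: mult_le_cancel_left_pos)
qed

lemma card_greater_fraction_ge:
  fixes R :: real
  assumes "R \<ge> 1"
  shows "real (card {m\<in>{1..M}. real M / R < real m}) \<ge> real M - real M / R"
proof -
  define F where "F = nat \<lfloor>real M / R\<rfloor>"
  have F_le: "real F \<le> real M / R" unfolding F_def using assms by (simp add: of_nat_floor)
  have "real M / R < real F + 1"
    unfolding F_def using assms real_of_int_floor_add_one_gt[of "real M / R"] by simp
  then have "{F+1..M} \<subseteq> {m\<in>{1..M}. real M / R < real m}" by auto
  then have "card {F+1..M} \<le> card {m\<in>{1..M}. real M / R < real m}"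
    by (intro card_mono) auto
  then show ?thesis using F_le by simp
qed

lemma sum_ln_power_ge:
  fixes R :: real
  assumes R: "R \<ge> 1" and MR: "real M \<ge> R" and lnM: "R * ln R \<le> ln (real M)"
  shows "(\<Sum>m\<in>{1..M}. ln (real m) ^ k) \<ge> (1 - 1/R) ^ (k+1) * real M * ln (real M) ^ k"
proof -
  define L where "L = ln (real M) - ln R"
  have "ln R \<le> ln (real M) / R" using lnM R by (simp add: pos_le_divide_eq mult.commute)
  then have L_ge: "L \<ge> (1 - 1/R) * ln (real M)" unfolding L_def by (simp add: algebra_simps)
  have base: "(1 - 1/R) * ln (real M) \<ge> 0" using R MR by simp
  have "(\<Sum>m\<in>{1..M}. if real M / R < real m then L ^ k else 0) \<le> (\<Sum>m\<in>{1..M}. ln (real m) ^ k)"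
  proof (intro sum_mono)
    fix m assume m: "m \<in> {1..M}"
    have "L \<le> ln (real m)" if "real M / R < real m"
    proof -
      have "L = ln (real M / R)" unfolding L_def using R MR by (simp add: ln_div)
      also have "\<dots> \<le> ln (real m)" using that R MR m by (subst ln_le_cancel_iff) auto
      finally show ?thesis .
    qed
    then show "(if real M / R < real m then L ^ k else 0) \<le> ln (real m) ^ k"
      using L_ge base m by (auto intro: power_mono)
  qed
  moreover have "(\<Sum>m\<in>{1..M}. if real M / R < real m then L ^ k else 0) =
        real (card {m\<in>{1..M}. real M / R < real m}) * L ^ k"
    by (simp add: sum.inter_filter[symmetric])
  moreover have "((1 - 1/R) * real M) * ((1 - 1/R) * ln (real M)) ^ k \<le>
        real (card {m\<in>{1..M}. real M / R < real m}) * L ^ k"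
    using card_greater_fraction_ge[OF R, of M] L_ge base
    by (intro mult_mono power_mono) (auto simp: algebra_simps)
  ultimately show ?thesis by (simp add: power_mult_distrib mult_ac)
qed

lemma sum_gen_mangoldt_div_ge:
  fixes R :: real
  assumes "R \<ge> 1" "real M \<ge> R" "R * ln R \<le> ln (real M)"
  shows "(1 - 1/R) ^ (k+1) * ln (real M) ^ k \<le> (\<Sum>e\<in>{1..M}. gen_mangoldt k e / real e)"
proof -
  have "real M * ((1 - 1/R) ^ (k+1) * ln (real M) ^ k) \<le> real M * (\<Sum>e\<in>{1..M}. gen_mangoldt k e / real e)"
    using sum_ln_power_ge[OF assms, of k] sum_ln_power_le_sum_gen_mangoldt[of k M] by (simp add: mult_ac)
  then show ?thesis using assms by (simp add: mult_le_cancel_left_pos)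
qed

section \<open>Totients of squarefree numbers\<close>

lemma totient_prod_primes:
  fixes T :: "nat set"
  assumes "finite T" "\<And>q. q \<in> T \<Longrightarrow> prime q"
  shows "real (totient (\<Prod>T)) = (\<Prod>q\<in>T. real q - 1)"
proof -
  have "totient (prod id T) = (\<Prod>q\<in>T. totient (id q))"
    using assms by (intro totient_prod_coprime) (auto simp: pairwise_def primes_coprime)
  also have "\<dots> = (\<Prod>q\<in>T. q - 1)" using assms by (intro prod.cong) (auto simp: totient_prime)
  finally have "real (totient (\<Prod>T)) = (\<Prod>q\<in>T. real (q - 1))" by simp
  also have "\<dots> = (\<Prod>q\<in>T. real q - 1)"
  proof (rule prod.cong[OF refl])
    fix q assume "q \<in> T"
    then have "q \<ge> 1" using assms(2) prime_ge_1_nat by blast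
    then show "real (q - 1) = real q - 1" by (simp add: of_nat_diff)
  qed
  finally show ?thesis .
qed

lemma inverse_totient_minus_inverse_bound:
  fixes T :: "nat set" and z K :: real
  assumes "finite T" "\<And>q. q \<in> T \<Longrightarrow> prime q" "\<And>q. q \<in> T \<Longrightarrow> real q > z"
    "real (card T) \<le> K" "z > 0" "2 * K \<le> z"
  shows "\<bar>1 / real (totient (\<Prod>T)) - 1 / real (\<Prod>T)\<bar> \<le> 2 * K / (z * real (\<Prod>T))"
proof -
  define d where "d = real (\<Prod>T)"
  define f where "f = real (totient (\<Prod>T))"
  define r where "r = (\<Prod>q\<in>T. 1 - 1 / real q)"
  have q1: "\<And>q. q \<in> T \<Longrightarrow> real q \<ge> 1" using assms(2) prime_ge_1_nat by auto
  have dpos: "d > 0" unfolding d_def using assms(2) by (simp add: prime_gt_0_nat prod_pos)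
  have "f = (\<Prod>q\<in>T. real q * (1 - 1 / real q))"
    unfolding f_def using totient_prod_primes[OF assms(1,2)] q1
    by (auto intro!: prod.cong simp: field_simps dest!: q1)
  then have fd: "f = d * r" unfolding d_def r_def by (simp add: prod.distrib)
  have "(\<Sum>q\<in>T. 1 / real q) \<le> (\<Sum>q\<in>T. 1 / z)"
    using assms(3,5) by (intro sum_mono) (simp add: frac_le less_imp_le)
  also have "\<dots> \<le> K / z" using assms by (simp add: divide_right_mono)
  finally have r_ge: "r \<ge> 1 - K / z"
    using prod_one_minus_ge_one_minus_sum[OF assms(1), of "\<lambda>q. 1 / real q"] q1
    unfolding r_def by fastforce
  have r_le: "r \<le> 1" unfolding r_def
  proof (rule prod_le_1)
    fix q assume "q \<in> T"
    with q1[of q] show "0 \<le> 1 - 1 / real q \<and> 1 - 1 / real q \<le> 1" by simp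
  qed
  have "K / z \<le> 1/2" using assms by (simp add: field_simps)
  then have "d * (1/2) \<le> d * r" using r_ge dpos by (intro mult_left_mono) auto
  then have f_ge: "f \<ge> d / 2" using fd by simp
  have "d * (1 - K / z) \<le> d * r" using r_ge dpos by (intro mult_left_mono) auto
  then have diff_le: "d - f \<le> d * (K / z)" using fd by (simp add: right_diff_distrib)
  have diff_ge: "0 \<le> d - f" using fd r_le dpos by (simp add: mult_left_le)
  have "1 / f - 1 / d = (d - f) / (d * f)" using f_ge dpos by (simp add: field_simps)
  also have "\<dots> \<le> (d * (K / z)) / (d * (d / 2))"
    using diff_le diff_ge f_ge dpos assms by (intro frac_le) (auto intro: mult_left_mono)
  also have "\<dots> = 2 * K / (z * d)" using dpos assms by (simp add: field_simps)
  finally have "1 / f - 1 / d \<le> 2 * K / (z * d)" .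
  moreover have "0 \<le> 1 / f - 1 / d" using diff_ge f_ge dpos by (simp add: frac_le)
  ultimately show ?thesis unfolding f_def[symmetric] d_def[symmetric] by simp
qed

section \<open>A lower bound for smooth numbers\<close>

definition smooth_upto :: "real \<Rightarrow> real \<Rightarrow> nat set" where
  "smooth_upto z t = {n. 1 \<le> n \<and> real n \<le> t \<and> (\<forall>p. prime p \<longrightarrow> p dvd n \<longrightarrow> real p \<le> z)}"

definition top_range :: "real \<Rightarrow> nat set" where
  "top_range z = {d\<in>{1..nat \<lfloor>z\<rfloor>}. z powr (1/8) < real d}"

lemma finite_smooth_upto [simp]: "finite (smooth_upto z t)"
proof (rule finite_subset)
  show "smooth_upto z t \<subseteq> {1..nat \<lfloor>t\<rfloor>}"
    unfolding smooth_upto_def by (auto intro: le_nat_floor)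
qed simp

lemma top_range_bounds:
  assumes "d \<in> top_range z" "z \<ge> 1"
  shows "d \<ge> 1" "real d \<le> z" "real d > z powr (1/8)"
  using assms unfolding top_range_def by (auto intro: real_le_of_le_nat_floor)

lemma card_smooth_upto_ge_half:
  assumes "1 \<le> t" "t \<le> z"
  shows "real (card (smooth_upto z t)) \<ge> t / 2"
proof -
  have "{1..nat \<lfloor>t\<rfloor>} \<subseteq> smooth_upto z t"
  proof
    fix n assume n: "n \<in> {1..nat \<lfloor>t\<rfloor>}"
    then have nt: "real n \<le> t" using assms by (intro real_le_of_le_nat_floor) auto
    moreover have "real p \<le> z" if "prime p" "p dvd n" for p
    proof -
      have "p \<le> n" using that n by (intro dvd_imp_le) auto
      then show ?thesis using nt assms by linarith
    qed
    ultimately show "n \<in> smooth_upto z t" using n unfolding smooth_upto_def by auto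
  qed
  then have "card {1..nat \<lfloor>t\<rfloor>} \<le> card (smooth_upto z t)" by (intro card_mono) auto
  then show ?thesis using real_nat_floor_ge_half[OF assms(1)] by simp
qed

lemma card_smooth_upto_div_le:
  assumes "d \<in> top_range z" "z \<ge> 1"
  shows "card (smooth_upto z (t / real d)) \<le> card {n\<in>smooth_upto z t. d dvd n}"
proof -
  note d = top_range_bounds[OF assms]
  have "(\<lambda>m. d * m) ` smooth_upto z (t / real d) \<subseteq> {n\<in>smooth_upto z t. d dvd n}"
  proof
    fix n assume "n \<in> (\<lambda>m. d * m) ` smooth_upto z (t / real d)"
    then obtain m where m: "n = d * m" "m \<in> smooth_upto z (t / real d)" by (rule imageE)
    then have m1: "1 \<le> m" "real d * real m \<le> t" "\<And>p. prime p \<Longrightarrow> p dvd m \<Longrightarrow> real p \<le> z"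
      using d(1) unfolding smooth_upto_def by (auto simp: field_simps)
    have "real p \<le> z" if "prime p" "p dvd n" for p
    proof -
      from that m have "p dvd d \<or> p dvd m" by (simp add: prime_dvd_mult_iff)
      then show ?thesis
      proof
        assume "p dvd d"
        then have "p \<le> d" using d by (intro dvd_imp_le) auto
        then show ?thesis using d by linarith
      qed (use m1(3)[OF that(1)] in auto)
    qed
    then show "n \<in> {n\<in>smooth_upto z t. d dvd n}"
      using m m1 d unfolding smooth_upto_def by auto
  qed
  moreover have "inj_on (\<lambda>m. d * m) (smooth_upto z (t / real d))" using d by (auto simp: inj_on_def)
  ultimately show ?thesis
    by (metis (no_types, lifting) card_image card_mono finite_smooth_upto finite_subset mem_Collect_eq subsetI
        finite_Collect_conjI)
qed

text \<open>Sum \<open>log n = \<Sum>\<^bsub>d | n\<^esub> \<Lambda>(d)\<close> over the \<open>z\<close>-smooth \<open>n \<le> t\<close>; every \<open>d \<cdot> m\<close> with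
  \<open>d \<le> z\<close> and \<open>m\<close> counted in \<open>smooth_upto z (t/d)\<close> is such an \<open>n\<close>.\<close>

lemma card_smooth_upto_mult_ln_ge:
  assumes "t \<ge> 1" "z \<ge> 1"
  shows "(\<Sum>d\<in>top_range z. gen_mangoldt 1 d * real (card (smooth_upto z (t / real d)))) \<le>
         real (card (smooth_upto z t)) * ln t"
proof -
  define S where "S = smooth_upto z t"
  have fin: "finite (top_range z)" unfolding top_range_def by simp
  have "(\<Sum>d\<in>top_range z. gen_mangoldt 1 d * real (card (smooth_upto z (t / real d)))) \<le>
        (\<Sum>d\<in>top_range z. gen_mangoldt 1 d * real (card {n\<in>S. d dvd id n}))"
    unfolding S_def using assms card_smooth_upto_div_le
    by (intro sum_mono mult_left_mono gen_mangoldt_nonneg) auto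
  also have "\<dots> = (\<Sum>n\<in>S. \<Sum>d\<in>top_range z. if d dvd id n then gen_mangoldt 1 d else 0)"
    using sum_dvd_indicator_swap[of S "top_range z" id "gen_mangoldt 1"] fin unfolding S_def by simp
  also have "\<dots> \<le> (\<Sum>n\<in>S. ln t)"
  proof (intro sum_mono)
    fix n assume n: "n \<in> S"
    then have n1: "n > 0" "real n \<le> t" unfolding S_def smooth_upto_def by auto
    have "(\<Sum>d\<in>top_range z. if d dvd id n then gen_mangoldt 1 d else 0) = (\<Sum>d\<in>{d\<in>top_range z. d dvd n}. gen_mangoldt 1 d)"
      by (simp only: id_apply sum.inter_filter[OF fin])
    also have "\<dots> \<le> (\<Sum>d | d dvd n. gen_mangoldt 1 d)"
      using n1 by (intro sum_mono2) (auto simp: gen_mangoldt_nonneg)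
    also have "\<dots> = ln (real n)" using sum_gen_mangoldt_divisors[of n 1] n1 by simp
    also have "\<dots> \<le> ln t" using n1 by simp
    finally show "(\<Sum>d\<in>top_range z. if d dvd id n then gen_mangoldt 1 d else 0) \<le> ln t" .
  qed
  finally show ?thesis unfolding S_def by simp
qed

lemma top_range_eq:
  assumes "z powr (1/8) \<ge> 1"
  shows "top_range z = {1..nat \<lfloor>z\<rfloor>} - {1..nat \<lfloor>z powr (1/8)\<rfloor>}"
proof (rule Set.set_eqI)
  fix d
  have "d \<le> nat \<lfloor>z powr (1/8)\<rfloor> \<longleftrightarrow> real d \<le> z powr (1/8)"
    using assms by (auto intro: le_nat_floor real_le_of_le_nat_floor)
  then show "d \<in> top_range z \<longleftrightarrow> d \<in> {1..nat \<lfloor>z\<rfloor>} - {1..nat \<lfloor>z powr (1/8)\<rfloor>}"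
    unfolding top_range_def by auto
qed

lemma sum_top_range_gen_mangoldt_ge:
  assumes zpos: "z > 0" and "ln z \<ge> 70"
  shows "(\<Sum>d\<in>top_range z. gen_mangoldt 1 d / real d) \<ge> ln z / 2"
proof -
  have "z \<ge> exp 70" using assms by (simp add: ln_ge_iff)
  moreover have "exp (70::real) \<ge> 1 + 70" by (rule exp_ge_add_one_self)
  ultimately have z71: "z \<ge> 71" by linarith
  define Mz where "Mz = nat \<lfloor>z\<rfloor>"
  define M8 where "M8 = nat \<lfloor>z powr (1/8)\<rfloor>"
  have z8: "z powr (1/8) \<ge> 1" using z71 by (intro ge_one_powr_ge_zero) auto
  have "z powr (1/8) \<le> z" using z71 powr_mono[of "1/8" 1 z] by simp
  then have M8le: "M8 \<le> Mz" unfolding M8_def Mz_def by (intro nat_mono floor_mono)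
  have M8ge: "M8 \<ge> 1" unfolding M8_def using z8 by (simp add: le_nat_floor)
  have split: "(\<Sum>d\<in>top_range z. gen_mangoldt 1 d / real d) =
      (\<Sum>d\<in>{1..Mz}. gen_mangoldt 1 d / real d) - (\<Sum>d\<in>{1..M8}. gen_mangoldt 1 d / real d)"
    unfolding top_range_eq[OF z8] Mz_def[symmetric] M8_def[symmetric] using M8le by (intro sum_diff) auto
  have Mzh: "real Mz \<ge> z / 2" unfolding Mz_def using real_nat_floor_ge_half[of z] z71 by simp
  then have "ln (z / 2) \<le> ln (real Mz)" using zpos by (subst ln_le_cancel_iff) auto
  then have lnMz: "ln (real Mz) \<ge> ln z - ln 2" using zpos by (simp add: ln_div)
  have "ln ((2::real) ^ 4) = real 4 * ln 2" by (rule ln_realpow)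
  then have "ln (16::real) = 4 * ln 2" by simp
  then have lnMz16: "16 * ln (16::real) \<le> ln (real Mz)" using lnMz ln_2_less_1 assms by linarith
  have Mz16: "(16::real) \<le> real Mz" using Mzh z71 by linarith
  have "(1 - 1/16::real) ^ (1+1) = 225/256" by simp
  then have lower: "(225/256) * ln (real Mz) \<le> (\<Sum>d\<in>{1..Mz}. gen_mangoldt 1 d / real d)"
    using sum_gen_mangoldt_div_ge[of 16 Mz 1] Mz16 lnMz16 by simp
  have "ln (real M8) \<le> ln (z powr (1/8))"
    unfolding M8_def using M8ge M8_def z8 by (subst ln_le_cancel_iff) (auto intro: real_le_of_le_nat_floor)
  also have "\<dots> = ln z / 8" using zpos by (simp add: ln_powr)
  finally have upper: "(\<Sum>d\<in>{1..M8}. gen_mangoldt 1 d / real d) \<le> ln z / 4"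
    using sum_gen_mangoldt_div_le[of M8 1] M8ge by simp
  have "(225/256) * ln z - (225/256) * ln 2 \<le> (225/256) * ln (real Mz)"
    using mult_left_mono[OF lnMz, of "225/256"] by (simp add: right_diff_distrib)
  then show ?thesis using split lower upper ln_2_less_1 assms by linarith
qed

fun smooth_density_bound :: "nat \<Rightarrow> real" where
  "smooth_density_bound 0 = 1/2"
| "smooth_density_bound (Suc j) = smooth_density_bound j / (real j + 9)"

lemma smooth_density_bound_pos: "smooth_density_bound j > 0"
  by (induction j) auto

lemma smooth_density_bound_Suc_le: "smooth_density_bound (Suc j) \<le> smooth_density_bound j"
  using smooth_density_bound_pos[of j] by (simp add: divide_le_eq)

lemma card_smooth_upto_ge_step:
  assumes zpos: "z > 0" and "ln z \<ge> 70" "c \<ge> 0" "z < t" "ln t \<le> (real j + 9) / 8 * ln z"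
    and smaller: "\<And>d. d \<in> top_range z \<Longrightarrow> c * (t / real d) \<le> real (card (smooth_upto z (t / real d)))"
  shows "c / (real j + 9) * t \<le> real (card (smooth_upto z t))"
proof -
  have "exp 70 \<le> z" using assms(2) zpos by (simp add: ln_ge_iff)
  then have z1: "z \<ge> 1" using one_le_exp_iff[of 70] by linarith
  have "c * t * (ln z / 2) \<le> c * t * (\<Sum>d\<in>top_range z. gen_mangoldt 1 d / real d)"
    using sum_top_range_gen_mangoldt_ge[OF zpos assms(2)] assms(3,4) zpos by (intro mult_left_mono) auto
  also have "\<dots> = (\<Sum>d\<in>top_range z. gen_mangoldt 1 d * (c * (t / real d)))"
    by (simp add: sum_distrib_left mult_ac)
  also have "\<dots> \<le> (\<Sum>d\<in>top_range z. gen_mangoldt 1 d * real (card (smooth_upto z (t / real d))))"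
    using smaller by (intro sum_mono mult_left_mono gen_mangoldt_nonneg) auto
  also have "\<dots> \<le> real (card (smooth_upto z t)) * ln t"
    using assms(4) z1 by (intro card_smooth_upto_mult_ln_ge) auto
  finally have main: "c * t * (ln z / 2) \<le> real (card (smooth_upto z t)) * ln t" .
  have "c / (real j + 9) * t * ln t \<le> c / (real j + 9) * t * ((real j + 9) / 8 * ln z)"
    using assms(3-5) zpos by (intro mult_left_mono) auto
  also have "\<dots> = c * t * (ln z / 8)" by (simp add: field_simps)
  also have "\<dots> \<le> c * t * (ln z / 2)" using assms(2-4) zpos z1 by (intro mult_left_mono) auto
  finally have "c / (real j + 9) * t * ln t \<le> real (card (smooth_upto z t)) * ln t"
    using main by linarith
  moreover have "ln t > 0" using assms(4) z1 by simp
  ultimately show ?thesis by (rule mult_right_le_imp_le)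
qed

text \<open>Induction on the range of \<open>t\<close>, which grows by a factor \<open>z\<^sup>1\<^sup>/\<^sup>8\<close> per step:
  dividing \<open>t\<close> by \<open>d \<in> top_range z\<close> lands in the previous range.\<close>

lemma card_smooth_upto_ge:
  assumes zpos: "z > 0" and "ln z \<ge> 70" "1 \<le> t" "t \<le> z powr ((real j + 8) / 8)"
  shows "real (card (smooth_upto z t)) \<ge> smooth_density_bound j * t"
  using assms(3,4)
proof (induction j arbitrary: t)
  case 0
  then show ?case using zpos card_smooth_upto_ge_half[of t z] by simp
next
  case (Suc j)
  have "exp 70 \<le> z" using assms(2) zpos by (simp add: ln_ge_iff)
  then have z1: "z \<ge> 1" using one_le_exp_iff[of 70] by linarith
  show ?case
  proof (cases "t \<le> z powr ((real j + 8) / 8)")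
    case True
    have "smooth_density_bound (Suc j) * t \<le> smooth_density_bound j * t"
      using smooth_density_bound_Suc_le[of j] Suc.prems by (intro mult_right_mono) auto
    then show ?thesis using Suc.IH[OF Suc.prems(1) True] by linarith
  next
    case False
    have "z \<le> z powr ((real j + 8) / 8)" using z1 powr_mono[of 1 "(real j + 8) / 8" z] by simp
    then have tz: "z < t" using False by linarith
    have "ln t \<le> ln (z powr ((real (Suc j) + 8) / 8))"
      using Suc.prems tz zpos by (subst ln_le_cancel_iff) auto
    also have "\<dots> = (real j + 9) / 8 * ln z" using zpos by (simp add: ln_powr add.commute)
    finally have lnt: "ln t \<le> (real j + 9) / 8 * ln z" .
    have "smooth_density_bound j * (t / real d) \<le> real (card (smooth_upto z (t / real d)))"
      if d: "d \<in> top_range z" for d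
    proof (rule Suc.IH)
      note dp = top_range_bounds[OF d z1]
      show "1 \<le> t / real d" using dp tz by (simp add: field_simps)
      have "t / real d \<le> z powr ((real (Suc j) + 8) / 8) / z powr (1/8)"
        using dp Suc.prems by (intro frac_le) auto
      also have "\<dots> = z powr ((real j + 8) / 8)"
        using zpos by (simp add: powr_diff[symmetric] add_divide_distrib add.commute)
      finally show "t / real d \<le> z powr ((real j + 8) / 8)" .
    qed
    then show ?thesis
      using card_smooth_upto_ge_step[OF zpos assms(2) _ tz lnt] smooth_density_bound_pos[of j] by simp
  qed
qed

definition primes_upto :: "real \<Rightarrow> nat set" where
  "primes_upto x = {p. prime p \<and> real p \<le> x}"

definition excluded_primes :: "real \<Rightarrow> nat set \<Rightarrow> nat set" where
  "excluded_primes x P = {q. prime q \<and> real q \<le> x \<and> q \<notin> P}"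

lemma finite_primes_upto [simp]: "finite (primes_upto x)"
proof (rule finite_subset)
  show "primes_upto x \<subseteq> {..nat \<lfloor>x\<rfloor>}" unfolding primes_upto_def by (auto intro: le_nat_floor)
qed simp

lemma finite_excluded_primes [simp]: "finite (excluded_primes x P)"
  by (rule finite_subset[OF _ finite_primes_upto[of x]]) (auto simp: primes_upto_def excluded_primes_def)

lemma prime_pi_eq_card: "prime_pi x = card (primes_upto x)"
  unfolding prime_pi_def primes_upto_def by simp

lemma prime_pi_ap_eq_card: "prime_pi_ap x d = card {p\<in>primes_upto x. d dvd p - 1}"
proof -
  have "[p = 1] (mod d) \<longleftrightarrow> d dvd p - 1" if "prime p" for p
    using that prime_ge_1_nat by (intro cong_altdef_nat) blast
  then have "{p. prime p \<and> real p \<le> x \<and> [p = 1] (mod d)} = {p\<in>primes_upto x. d dvd p - 1}"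
    unfolding primes_upto_def by blast
  then show ?thesis unfolding prime_pi_ap_def by simp
qed

lemma prime_pi_set_eq_card_sifted:
  "prime_pi_set x P = card {p\<in>primes_upto x. \<forall>q\<in>excluded_primes x P. \<not> q dvd p - 1}"
proof -
  have "(\<forall>q. prime q \<longrightarrow> q dvd p - 1 \<longrightarrow> q \<in> P) \<longleftrightarrow> (\<forall>q\<in>excluded_primes x P. \<not> q dvd p - 1)"
    if "prime p" "real p \<le> x" for p
  proof -
    have "real q \<le> x" if "q dvd p - 1" "prime q" for q
      using that \<open>prime p\<close> \<open>real p \<le> x\<close> dvd_imp_le[of q "p - 1"] prime_gt_1_nat[of p] by simp
    then show ?thesis unfolding excluded_primes_def by blast
  qed
  then have "{p. prime p \<and> real p \<le> x \<and> (\<forall>q. prime q \<longrightarrow> q dvd p - 1 \<longrightarrow> q \<in> P)} =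
             {p\<in>primes_upto x. \<forall>q\<in>excluded_primes x P. \<not> q dvd p - 1}"
    unfolding primes_upto_def by blast
  then show ?thesis unfolding prime_pi_set_def by simp
qed

lemma Psi_set_eq_card_sifted:
  assumes "x \<ge> 0"
  shows "Psi_set x P = card {n\<in>{1..nat \<lfloor>x\<rfloor>}. \<forall>q\<in>excluded_primes x P. \<not> q dvd n}"
proof -
  have "(\<forall>p. prime p \<longrightarrow> p dvd n \<longrightarrow> p \<in> P) \<longleftrightarrow> (\<forall>q\<in>excluded_primes x P. \<not> q dvd n)"
    if "1 \<le> n" "real n \<le> x" for n
  proof -
    have "real q \<le> x" if "q dvd n" for q
      using that \<open>1 \<le> n\<close> \<open>real n \<le> x\<close> dvd_imp_le[of q n] by simp
    then show ?thesis unfolding excluded_primes_def by blast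
  qed
  moreover have "n \<in> {1..nat \<lfloor>x\<rfloor>} \<longleftrightarrow> 1 \<le> n \<and> real n \<le> x" for n
  proof
    assume "n \<in> {1..nat \<lfloor>x\<rfloor>}"
    then show "1 \<le> n \<and> real n \<le> x" using assms real_le_of_le_nat_floor by auto
  next
    assume "1 \<le> n \<and> real n \<le> x"
    then show "n \<in> {1..nat \<lfloor>x\<rfloor>}" by (auto intro: le_nat_floor)
  qed
  ultimately have "{n. 1 \<le> n \<and> real n \<le> x \<and> (\<forall>p. prime p \<longrightarrow> p dvd n \<longrightarrow> p \<in> P)} =
                  {n\<in>{1..nat \<lfloor>x\<rfloor>}. \<forall>q\<in>excluded_primes x P. \<not> q dvd n}"
    by (intro Collect_cong) blast
  then show ?thesis unfolding Psi_set_def by simp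
qed

locale sieve_setting =
  fixes x U \<epsilon> :: real and K :: nat and P :: "nat set"
  assumes x_gt_1: "x > 1" and U_ge_1: "U \<ge> 1" and U_le_K: "U \<le> real K"
    and eps_pos: "0 < \<epsilon>" and eps_lt_1: "\<epsilon> < 1"
    and small_primes_in_P: "{p. prime p \<and> real p \<le> x powr (1/U)} \<subseteq> P"
    and K_le_z: "2 * real K \<le> x powr (1/U)"
begin

definition "z = x powr (1/U)"
definition "N = excluded_primes x P"
definition "M = nat \<lfloor>x powr (1 - \<epsilon>)\<rfloor>"
definition "Mx = nat \<lfloor>x\<rfloor>"
definition "small_sets = {T\<in>Pow N. \<Prod>T \<le> M}"
definition "large_sets = {T\<in>Pow N. \<not> \<Prod>T \<le> M}"
definition "error_EH = (\<Sum>d\<in>{1..M}. \<bar>real (prime_pi_ap x d) - real (prime_pi x) / real (totient d)\<bar>)"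
definition "W = (\<Sum>e\<in>{1..M}. gen_mangoldt K e / real e)"
definition "sieve_density f = (\<Sum>T\<in>small_sets. (-1) ^ card T / f (\<Prod>T))"

lemma z_gt_1: "z > 1"
  unfolding z_def using x_gt_1 U_ge_1 by (intro gr_one_powr) auto

lemma ln_z: "ln z = ln x / U"
  unfolding z_def using x_gt_1 by (simp add: ln_powr)

lemma N_memberD:
  assumes "q \<in> N"
  shows "prime q" "real q > z" "real q \<le> x"
proof -
  from assms show "prime q" "real q \<le> x" unfolding N_def excluded_primes_def by auto
  then show "real q > z" using assms small_primes_in_P unfolding N_def excluded_primes_def z_def by auto
qed

lemma finite_N [simp]: "finite N" unfolding N_def by simp

lemma Pow_N_memberD:
  assumes "T \<in> Pow N"
  shows "finite T" "\<And>q. q \<in> T \<Longrightarrow> prime q" "\<And>q. q \<in> T \<Longrightarrow> real q > z" "\<Prod>T > 0"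
  using assms N_memberD finite_subset[of T N] by (auto simp: prime_gt_0_nat prod_pos)

lemma card_N_divisors_le:
  assumes "n \<ge> 1" "real n \<le> x"
  shows "card (N \<inter> {q. q dvd n}) \<le> K"
proof -
  define S where "S = N \<inter> {q. q dvd n}"
  have S: "finite S" "\<And>q. q \<in> S \<Longrightarrow> prime q" "\<And>q. q \<in> S \<Longrightarrow> real q > z"
    unfolding S_def using N_memberD by auto
  have "\<Prod>S dvd n" using S unfolding S_def by (subst prod_primes_dvd_iff) auto
  then have "\<Prod>S \<le> n" using assms by (intro dvd_imp_le) auto
  then have "real (\<Prod>S) \<le> x" using assms(2) by linarith
  moreover have "z ^ card S \<le> real (\<Prod>S)"
    using S z_gt_1 prod_mono[of S "\<lambda>_. z" "\<lambda>q. real q"] by (simp add: less_imp_le)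
  moreover have "z ^ card S = x powr (real (card S) / U)"
    unfolding z_def using x_gt_1 by (simp add: powr_realpow[symmetric] powr_powr)
  ultimately have "x powr (real (card S) / U) \<le> x powr 1" using x_gt_1 by simp
  then have "real (card S) / U \<le> 1" using x_gt_1 by (simp only: powr_le_cancel_iff)
  then show ?thesis unfolding S_def using U_ge_1 U_le_K by (simp add: divide_le_eq)
qed

lemma card_le_K_if_prod_dvd:
  assumes "T \<in> Pow N" "\<Prod>T dvd n" "n \<ge> 1" "real n \<le> x"
  shows "T \<subseteq> N \<inter> {q. q dvd n}" "card T \<le> K"
proof -
  show sub: "T \<subseteq> N \<inter> {q. q dvd n}"
    using assms Pow_N_memberD[OF assms(1)] prod_primes_dvd_iff[of T n] by auto
  have "card T \<le> card (N \<inter> {q. q dvd n})" by (intro card_mono sub) simp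
  then show "card T \<le> K" using card_N_divisors_le[OF assms(3,4)] by linarith
qed

lemma M_bounds: "M \<ge> 1" "real M \<le> x powr (1 - \<epsilon>)" "real M \<le> x"
proof -
  have "x powr (1 - \<epsilon>) \<ge> 1" using x_gt_1 eps_lt_1 by (intro ge_one_powr_ge_zero) auto
  then show "M \<ge> 1" unfolding M_def by (simp add: le_nat_floor)
  show M_le: "real M \<le> x powr (1 - \<epsilon>)" unfolding M_def using x_gt_1 by (simp add: of_nat_floor)
  have "x powr (1 - \<epsilon>) \<le> x powr 1" using x_gt_1 eps_pos by (intro powr_mono) auto
  then show "real M \<le> x" using M_le x_gt_1 by simp
qed

text \<open>A single set in \<open>large_sets\<close> dividing \<open>n\<close> already contributes
  \<open>\<Lambda>\<^sub>K(\<Prod>T) \<ge> (log z)\<^sup>K\<close> to the right-hand side, and there are at most \<open>2\<^sup>K\<close> of them.\<close>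

lemma card_large_sets_dvd_le:
  assumes "n \<ge> 1" "real n \<le> x"
  shows "real (card {T\<in>large_sets. \<Prod>T dvd n}) \<le>
         2 ^ K / ln z ^ K * (\<Sum>d | d dvd n \<and> M < d. gen_mangoldt K d)"
proof (cases "{T\<in>large_sets. \<Prod>T dvd n} = {}")
  case True
  have "(\<Sum>d | d dvd n \<and> M < d. gen_mangoldt K d) \<ge> 0" by (intro sum_nonneg gen_mangoldt_nonneg)
  then show ?thesis using z_gt_1 by (simp add: True)
next
  case False
  then obtain T0 where T0: "T0 \<in> Pow N" "\<Prod>T0 > M" "\<Prod>T0 dvd n"
    unfolding large_sets_def by auto
  have pf: "prime_factors (\<Prod>T0) = T0"
    using Pow_N_memberD[OF T0(1)] by (intro prime_factors_prod_primes) auto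
  have "ln z ^ K \<le> gen_mangoldt K (\<Prod>T0)"
    using Pow_N_memberD[OF T0(1)] T0 M_bounds(1) z_gt_1 card_le_K_if_prod_dvd(2)[OF T0(1,3) assms]
    by (intro gen_mangoldt_ge_ln_power) (auto simp: pf less_imp_le)
  also have "\<dots> \<le> (\<Sum>d | d dvd n \<and> M < d. gen_mangoldt K d)"
    using T0 assms by (intro member_le_sum gen_mangoldt_nonneg) (auto intro: finite_subset[OF _ finite_divisors_nat[of n]])
  finally have one_le: "1 \<le> (\<Sum>d | d dvd n \<and> M < d. gen_mangoldt K d) / ln z ^ K"
    using z_gt_1 by simp
  have "card {T\<in>large_sets. \<Prod>T dvd n} \<le> card (Pow (N \<inter> {q. q dvd n}))"
    using card_le_K_if_prod_dvd(1)[OF _ _ assms] unfolding large_sets_def by (intro card_mono) auto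
  also have "\<dots> = 2 ^ card (N \<inter> {q. q dvd n})" by (rule card_Pow) simp
  also have "\<dots> \<le> 2 ^ K" using card_N_divisors_le[OF assms] by (intro power_increasing) auto
  finally have "real (card {T\<in>large_sets. \<Prod>T dvd n}) \<le> 2 ^ K"
    by (simp add: numeral_power_le_of_nat_cancel_iff)
  also have "\<dots> \<le> 2 ^ K * ((\<Sum>d | d dvd n \<and> M < d. gen_mangoldt K d) / ln z ^ K)"
    using mult_left_mono[OF one_le, of "2 ^ K"] by simp
  finally show ?thesis by simp
qed

lemma finite_small_sets [simp]: "finite small_sets" and finite_large_sets [simp]: "finite large_sets"
  unfolding small_sets_def large_sets_def by simp_all

lemma small_sets_memberD:
  assumes "T \<in> small_sets"
  shows "T \<in> Pow N" "\<Prod>T \<in> {1..M}" "card T \<le> K"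
proof -
  show TN: "T \<in> Pow N" using assms unfolding small_sets_def by auto
  show "\<Prod>T \<in> {1..M}" using assms Pow_N_memberD(4)[OF TN] unfolding small_sets_def by auto
  then have "real (\<Prod>T) \<le> x" using M_bounds(3) by (simp del: of_nat_prod)
  then show "card T \<le> K" using card_le_K_if_prod_dvd(2)[OF TN dvd_refl] \<open>\<Prod>T \<in> {1..M}\<close> by auto
qed

lemma sum_small_sets_le:
  fixes g :: "nat \<Rightarrow> real"
  assumes "\<And>d. g d \<ge> 0"
  shows "(\<Sum>T\<in>small_sets. g (\<Prod>T)) \<le> (\<Sum>d\<in>{1..M}. g d)"
proof -
  have "inj_on (\<lambda>T. \<Prod>T) small_sets"
    by (rule inj_on_subset[OF inj_on_prod_primes[OF finite_N N_memberD(1)]]) (auto simp: small_sets_def)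
  then have "(\<Sum>T\<in>small_sets. g (\<Prod>T)) = (\<Sum>d\<in>(\<lambda>T. \<Prod>T) ` small_sets. g d)"
    by (simp add: sum.reindex)
  also have "\<dots> \<le> (\<Sum>d\<in>{1..M}. g d)"
    using small_sets_memberD assms by (intro sum_mono2) auto
  finally show ?thesis .
qed

lemma sifted_count_approx:
  fixes g :: "'a \<Rightarrow> nat" and X :: "nat \<Rightarrow> real"
  assumes "finite A"
  shows "\<bar>real (card {a\<in>A. \<forall>q\<in>N. \<not> q dvd g a}) - (\<Sum>T\<in>small_sets. (-1) ^ card T * X (\<Prod>T))\<bar> \<le>
         (\<Sum>d\<in>{1..M}. \<bar>real (card {a\<in>A. d dvd g a}) - X d\<bar>) +
         (\<Sum>T\<in>large_sets. real (card {a\<in>A. \<Prod>T dvd g a}))"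
proof -
  define c where "c d = real (card {a\<in>A. d dvd g a})" for d
  have "Pow N = small_sets \<union> large_sets" "small_sets \<inter> large_sets = {}"
    unfolding small_sets_def large_sets_def by auto
  then have "real (card {a\<in>A. \<forall>q\<in>N. \<not> q dvd g a}) =
        (\<Sum>T\<in>small_sets. (-1) ^ card T * c (\<Prod>T)) + (\<Sum>T\<in>large_sets. (-1) ^ card T * c (\<Prod>T))"
    unfolding c_def using card_sifted_incl_excl[OF assms finite_N N_memberD(1), of g]
    by (simp add: sum.union_disjoint)
  then have "real (card {a\<in>A. \<forall>q\<in>N. \<not> q dvd g a}) - (\<Sum>T\<in>small_sets. (-1) ^ card T * X (\<Prod>T)) =
        (\<Sum>T\<in>small_sets. (-1) ^ card T * (c (\<Prod>T) - X (\<Prod>T))) + (\<Sum>T\<in>large_sets. (-1) ^ card T * c (\<Prod>T))"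
    by (simp add: sum_subtractf right_diff_distrib)
  also have "\<bar>\<dots>\<bar> \<le> (\<Sum>T\<in>small_sets. \<bar>c (\<Prod>T) - X (\<Prod>T)\<bar>) + (\<Sum>T\<in>large_sets. c (\<Prod>T))"
    by (rule order.trans[OF abs_triangle_ineq add_mono[OF order.trans[OF sum_abs] order.trans[OF sum_abs]]])
       (simp_all add: abs_mult c_def)
  also have "\<dots> \<le> (\<Sum>d\<in>{1..M}. \<bar>c d - X d\<bar>) + (\<Sum>T\<in>large_sets. c (\<Prod>T))"
    by (intro add_right_mono sum_small_sets_le) simp
  finally show ?thesis unfolding c_def .
qed

lemma large_sets_count_le:
  fixes g :: "'a \<Rightarrow> nat"
  assumes "finite A" "\<And>a. a \<in> A \<Longrightarrow> 1 \<le> g a \<and> real (g a) \<le> x"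
  shows "(\<Sum>T\<in>large_sets. real (card {a\<in>A. \<Prod>T dvd g a})) \<le>
         2 ^ K / ln z ^ K * (real (card A) * ln x ^ K -
           (\<Sum>e\<in>{1..M}. gen_mangoldt K e * real (card {a\<in>A. e dvd g a})))"
proof -
  define C where "C = 2 ^ K / ln z ^ K"
  have "C \<ge> 0" unfolding C_def using z_gt_1 by simp
  have "(\<Sum>T\<in>large_sets. real (card {a\<in>A. \<Prod>T dvd g a})) = (\<Sum>a\<in>A. real (card {T\<in>large_sets. \<Prod>T dvd g a}))"
    using sum_card_filter_swap[OF finite_large_sets assms(1), of "\<lambda>T a. \<Prod>T dvd g a"] by (simp flip: of_nat_sum)
  also have "\<dots> \<le> (\<Sum>a\<in>A. C * (ln x ^ K - (\<Sum>e\<in>{1..M}. if e dvd g a then gen_mangoldt K e else 0)))"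
  proof (rule sum_mono)
    fix a assume a: "a \<in> A"
    have "ln (real (g a)) ^ K \<le> ln x ^ K" using assms(2)[OF a] by (intro power_mono) auto
    then have "(\<Sum>d | d dvd g a \<and> M < d. gen_mangoldt K d) \<le>
               ln x ^ K - (\<Sum>e\<in>{1..M}. if e dvd g a then gen_mangoldt K e else 0)"
      using assms(2)[OF a] by (subst sum_gen_mangoldt_large_divisors) auto
    then have "C * (\<Sum>d | d dvd g a \<and> M < d. gen_mangoldt K d) \<le>
               C * (ln x ^ K - (\<Sum>e\<in>{1..M}. if e dvd g a then gen_mangoldt K e else 0))"
      using \<open>C \<ge> 0\<close> by (rule mult_left_mono)
    then show "real (card {T\<in>large_sets. \<Prod>T dvd g a}) \<le>
               C * (ln x ^ K - (\<Sum>e\<in>{1..M}. if e dvd g a then gen_mangoldt K e else 0))"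
      using card_large_sets_dvd_le[of "g a"] assms(2)[OF a] unfolding C_def by linarith
  qed
  also have "\<dots> = C * (real (card A) * ln x ^ K -
           (\<Sum>e\<in>{1..M}. gen_mangoldt K e * real (card {a\<in>A. e dvd g a})))"
    using sum_dvd_indicator_swap[OF assms(1), of "{1..M}" g "gen_mangoldt K"]
    by (simp add: sum_distrib_left[symmetric] sum_subtractf)
  finally show ?thesis unfolding C_def .
qed

lemma gen_mangoldt_le_ln_x_power:
  assumes "e \<in> {1..M}"
  shows "gen_mangoldt K e \<le> ln x ^ K"
proof -
  have "gen_mangoldt K e \<le> ln (real e) ^ K" using assms by (intro gen_mangoldt_le_ln_power) auto
  also have "\<dots> \<le> ln x ^ K" using assms M_bounds(3) by (intro power_mono) auto
  finally show ?thesis .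
qed

lemma sum_gen_mangoldt_prime_pi_ap_ge:
  "(\<Sum>e\<in>{1..M}. gen_mangoldt K e * real (prime_pi_ap x e)) \<ge> real (prime_pi x) * W - ln x ^ K * error_EH"
proof -
  define pp where "pp = real (prime_pi x)"
  have "pp * (gen_mangoldt K e / real e) - ln x ^ K * \<bar>real (prime_pi_ap x e) - pp / real (totient e)\<bar>
        \<le> gen_mangoldt K e * real (prime_pi_ap x e)" if e: "e \<in> {1..M}" for e
  proof -
    define L a b where "L = gen_mangoldt K e" and "a = real (prime_pi_ap x e)" and "b = pp / real (totient e)"
    have L: "0 \<le> L" "L \<le> ln x ^ K" unfolding L_def using gen_mangoldt_nonneg gen_mangoldt_le_ln_x_power[OF e] by auto
    have "pp / real e \<le> b" unfolding b_def pp_def using e by (intro divide_left_mono) (auto simp: totient_le)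
    then have "L * (pp / real e) \<le> L * b" using L by (intro mult_left_mono) auto
    moreover have "L * \<bar>a - b\<bar> \<le> ln x ^ K * \<bar>a - b\<bar>" using L by (intro mult_right_mono) auto
    moreover have "L * (b - \<bar>a - b\<bar>) \<le> L * a" using L by (intro mult_left_mono) auto
    ultimately have "L * (pp / real e) - ln x ^ K * \<bar>a - b\<bar> \<le> L * a" by (simp add: right_diff_distrib)
    then show ?thesis unfolding L_def a_def b_def by (simp add: field_simps)
  qed
  then have "(\<Sum>e\<in>{1..M}. pp * (gen_mangoldt K e / real e) - ln x ^ K * \<bar>real (prime_pi_ap x e) - pp / real (totient e)\<bar>)
             \<le> (\<Sum>e\<in>{1..M}. gen_mangoldt K e * real (prime_pi_ap x e))"
    by (intro sum_mono) auto
  then show ?thesis unfolding W_def error_EH_def pp_def by (simp add: sum_subtractf sum_distrib_left)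
qed

lemma prime_side_approx:
  "\<bar>real (prime_pi_set x P) - real (prime_pi x) * sieve_density (\<lambda>d. real (totient d))\<bar> \<le>
   error_EH + 2 ^ K / ln z ^ K *
     (real (prime_pi x) * ln x ^ K - real (prime_pi x) * W + ln x ^ K * error_EH)"
proof -
  define A where "A = primes_upto x"
  have "1 \<le> p - 1 \<and> real (p - 1) \<le> x" if "p \<in> A" for p
    using that prime_ge_2_nat[of p] unfolding A_def primes_upto_def by (auto simp: of_nat_diff)
  then have A: "finite A" "\<And>p. p \<in> A \<Longrightarrow> 1 \<le> p - 1 \<and> real (p - 1) \<le> x"
    unfolding A_def by auto
  have count: "card {p\<in>A. d dvd p - 1} = prime_pi_ap x d" for d
    unfolding A_def by (simp add: prime_pi_ap_eq_card)
  have sifted: "card {p\<in>A. \<forall>q\<in>N. \<not> q dvd p - 1} = prime_pi_set x P"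
    unfolding A_def N_def by (simp add: prime_pi_set_eq_card_sifted)
  have main: "(\<Sum>T\<in>small_sets. (-1) ^ card T * (real (prime_pi x) / real (totient (\<Prod>T)))) =
              real (prime_pi x) * sieve_density (\<lambda>d. real (totient d))"
    unfolding sieve_density_def sum_distrib_left by (rule sum.cong[OF refl]) simp
  have "\<bar>real (prime_pi_set x P) - real (prime_pi x) * sieve_density (\<lambda>d. real (totient d))\<bar> \<le>
      error_EH + (\<Sum>T\<in>large_sets. real (card {p\<in>A. \<Prod>T dvd p - 1}))"
    using sifted_count_approx[OF A(1), of "\<lambda>p. p - 1" "\<lambda>d. real (prime_pi x) / real (totient d)"]
    unfolding count sifted main error_EH_def .
  also have "\<dots> \<le> error_EH + 2 ^ K / ln z ^ K *
     (real (prime_pi x) * ln x ^ K - (\<Sum>e\<in>{1..M}. gen_mangoldt K e * real (prime_pi_ap x e)))"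
    using large_sets_count_le[of A "\<lambda>p. p - 1", OF A] unfolding count by (simp add: A_def prime_pi_eq_card)
  also have "\<dots> \<le> error_EH + 2 ^ K / ln z ^ K *
     (real (prime_pi x) * ln x ^ K - real (prime_pi x) * W + ln x ^ K * error_EH)"
    using sum_gen_mangoldt_prime_pi_ap_ge z_gt_1 by (intro add_left_mono mult_left_mono) auto
  finally show ?thesis .
qed

lemma sum_gen_mangoldt_floor_div_ge:
  "x * W - real M * ln x ^ K \<le> (\<Sum>e\<in>{1..M}. gen_mangoldt K e * real (Mx div e))"
proof -
  have "x * (gen_mangoldt K e / real e) - ln x ^ K \<le> gen_mangoldt K e * real (Mx div e)"
    if e: "e \<in> {1..M}" for e
  proof -
    have "x / real e - 1 \<le> real (Mx div e)"
      using nat_floor_div_approx[of e x] e x_gt_1 unfolding Mx_def by auto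
    then have "gen_mangoldt K e * (x / real e - 1) \<le> gen_mangoldt K e * real (Mx div e)"
      by (intro mult_left_mono gen_mangoldt_nonneg)
    then show ?thesis using gen_mangoldt_le_ln_x_power[OF e] by (simp add: field_simps)
  qed
  then have "(\<Sum>e\<in>{1..M}. x * (gen_mangoldt K e / real e) - ln x ^ K) \<le>
             (\<Sum>e\<in>{1..M}. gen_mangoldt K e * real (Mx div e))"
    by (intro sum_mono) auto
  then show ?thesis unfolding W_def by (simp add: sum_subtractf sum_distrib_left)
qed

lemma integer_side_approx:
  "\<bar>real (Psi_set x P) - x * sieve_density real\<bar> \<le>
   real M + 2 ^ K / ln z ^ K * (x * ln x ^ K - x * W + real M * ln x ^ K)"
proof -
  define A where "A = {1..Mx}"
  have A: "finite A" "\<And>n. n \<in> A \<Longrightarrow> 1 \<le> n \<and> real n \<le> x"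
    unfolding A_def Mx_def using x_gt_1 by (auto intro: real_le_of_le_nat_floor)
  have count: "card {n\<in>A. d dvd n} = Mx div d" if "d \<ge> 1" for d
    unfolding A_def using that card_multiples_atLeastAtMost[of d Mx] by simp
  have sifted: "card {n\<in>A. \<forall>q\<in>N. \<not> q dvd n} = Psi_set x P"
    unfolding A_def N_def Mx_def using x_gt_1 by (simp add: Psi_set_eq_card_sifted)
  have main: "(\<Sum>T\<in>small_sets. (-1) ^ card T * (x / real (\<Prod>T))) = x * sieve_density real"
    unfolding sieve_density_def sum_distrib_left by (rule sum.cong[OF refl]) simp
  have "(\<Sum>d\<in>{1..M}. \<bar>real (card {n\<in>A. d dvd n}) - x / real d\<bar>) \<le> (\<Sum>d\<in>{1..M}. 1)"
    using x_gt_1 by (intro sum_mono) (auto simp: count Mx_def intro!: nat_floor_div_approx)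
  then have "\<bar>real (Psi_set x P) - x * sieve_density real\<bar> \<le>
      real M + (\<Sum>T\<in>large_sets. real (card {n\<in>A. \<Prod>T dvd n}))"
    using sifted_count_approx[OF A(1), of "\<lambda>n. n" "\<lambda>d. x / real d"]
    unfolding sifted main by simp
  also have "\<dots> \<le> real M + 2 ^ K / ln z ^ K *
     (real Mx * ln x ^ K - (\<Sum>e\<in>{1..M}. gen_mangoldt K e * real (Mx div e)))"
  proof -
    have "(\<Sum>e\<in>{1..M}. gen_mangoldt K e * real (card {n\<in>A. e dvd n})) =
          (\<Sum>e\<in>{1..M}. gen_mangoldt K e * real (Mx div e))"
      by (intro sum.cong refl) (simp add: count)
    moreover have "card A = Mx" by (simp add: A_def)
    ultimately show ?thesis using large_sets_count_le[of A "\<lambda>n. n"] A by simp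
  qed
  also have "\<dots> \<le> real M + 2 ^ K / ln z ^ K * (x * ln x ^ K - x * W + real M * ln x ^ K)"
  proof -
    have "real Mx * ln x ^ K \<le> x * ln x ^ K"
      unfolding Mx_def using x_gt_1 by (intro mult_right_mono) (auto simp: of_nat_floor)
    then show ?thesis using sum_gen_mangoldt_floor_div_ge z_gt_1 by (intro add_left_mono mult_left_mono) auto
  qed
  finally show ?thesis .
qed

lemma sieve_density_diff:
  "\<bar>sieve_density (\<lambda>d. real (totient d)) - sieve_density real\<bar> \<le> 2 * real K / z * (1 + ln (real M))"
proof -
  have "\<bar>sieve_density (\<lambda>d. real (totient d)) - sieve_density real\<bar> \<le>
        (\<Sum>T\<in>small_sets. \<bar>1 / real (totient (\<Prod>T)) - 1 / real (\<Prod>T)\<bar>)"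
  proof -
    have sign_abs: "\<bar>(-1) ^ c / a - (-1) ^ c / b\<bar> = \<bar>1 / a - 1 / b\<bar>" for c :: nat and a b :: real
      by (simp add: divide_inverse right_diff_distrib[symmetric] abs_mult)
    show ?thesis
      unfolding sieve_density_def sum_subtractf[symmetric]
      by (rule order.trans[OF sum_abs]) (simp only: sign_abs order_refl)
  qed
  also have "\<dots> \<le> (\<Sum>T\<in>small_sets. 2 * real K / (z * real (\<Prod>T)))"
  proof (rule sum_mono)
    fix T assume T: "T \<in> small_sets"
    show "\<bar>1 / real (totient (\<Prod>T)) - 1 / real (\<Prod>T)\<bar> \<le> 2 * real K / (z * real (\<Prod>T))"
      using Pow_N_memberD[OF small_sets_memberD(1)[OF T]] small_sets_memberD(3)[OF T] z_gt_1 K_le_z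
      by (intro inverse_totient_minus_inverse_bound) (auto simp: z_def)
  qed
  also have "\<dots> \<le> (\<Sum>d\<in>{1..M}. 2 * real K / (z * real d))"
    using z_gt_1 by (intro sum_small_sets_le) simp
  also have "\<dots> = 2 * real K / z * (\<Sum>d\<in>{1..M}. 1 / real d)"
    by (simp add: sum_distrib_left)
  also have "\<dots> \<le> 2 * real K / z * (1 + ln (real M))"
    using sum_inverse_le_1_plus_ln[OF M_bounds(1)] z_gt_1 by (intro mult_left_mono) auto
  finally show ?thesis .
qed

lemma sieve_comparison:
  assumes "prime_pi x > 0"
  defines "A \<equiv> (2 * U) ^ K"
  shows "\<bar>real (prime_pi_set x P) / real (prime_pi x) - real (Psi_set x P) / x\<bar> \<le>
    (1 + A) * (error_EH / real (prime_pi x)) + 2 * A * (1 - W / ln x ^ K) +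
    2 * real K / z * (1 + ln (real M)) + (1 + A) * (real M / x)"
proof -
  define pp L where "pp = real (prime_pi x)" and "L = ln x ^ K"
  have pos: "pp > 0" "x > 0" "L > 0" using assms x_gt_1 unfolding pp_def L_def by auto
  have C: "2 ^ K / ln z ^ K = A / L"
    unfolding A_def L_def ln_z using U_ge_1 by (simp add: power_divide power_mult_distrib)
  have scale: "A / L * (p * L - p * W + L * E) / p = A * (1 - W / L) + A * (E / p)" if "p > 0" for p E
    using that pos by (simp add: field_simps)
  define Sphi S1 where "Sphi = sieve_density (\<lambda>d. real (totient d))" and "S1 = sieve_density real"
  have "real (prime_pi_set x P) / pp - real (Psi_set x P) / x =
        (real (prime_pi_set x P) - pp * Sphi) / pp + (Sphi - S1) - (real (Psi_set x P) - x * S1) / x"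
    using pos by (simp add: field_simps)
  also have "\<bar>\<dots>\<bar> \<le> \<bar>real (prime_pi_set x P) - pp * Sphi\<bar> / pp + \<bar>Sphi - S1\<bar> + \<bar>real (Psi_set x P) - x * S1\<bar> / x"
    using pos by (auto simp: abs_divide intro!: order.trans[OF abs_triangle_ineq4] order.trans[OF abs_triangle_ineq] add_mono)
  also have "\<dots> \<le> (error_EH + A / L * (pp * L - pp * W + L * error_EH)) / pp +
      2 * real K / z * (1 + ln (real M)) + (real M + A / L * (x * L - x * W + real M * L)) / x"
    using prime_side_approx integer_side_approx sieve_density_diff pos
    unfolding pp_def L_def Sphi_def S1_def C by (intro add_mono divide_right_mono) auto
  also have "\<dots> = error_EH / pp + (A * (1 - W / L) + A * (error_EH / pp)) +
      2 * real K / z * (1 + ln (real M)) + real M / x + (A * (1 - W / L) + A * (real M / x))"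
    using scale[OF pos(1)] scale[OF pos(2)] by (simp add: add_divide_distrib mult.commute[of "real M"])
  also have "\<dots> = (1 + A) * (error_EH / pp) + 2 * A * (1 - W / L) +
      2 * real K / z * (1 + ln (real M)) + (1 + A) * (real M / x)"
    by (simp add: algebra_simps add_divide_distrib)
  finally show ?thesis unfolding pp_def L_def .
qed

lemma W_ge:
  fixes R :: real
  assumes "R \<ge> 1" "R \<le> x powr (1 - \<epsilon>) / 2" "R * ln R \<le> ln (x powr (1 - \<epsilon>) / 2)"
    and "ln 2 \<le> \<epsilon> * ln x" "\<epsilon> \<le> 1/2"
  shows "W / ln x ^ K \<ge> 1 - (real K + 1) / R - 2 * real K * \<epsilon>"
proof -
  have xe1: "x powr (1 - \<epsilon>) \<ge> 1" using x_gt_1 eps_lt_1 by (intro ge_one_powr_ge_zero) auto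
  have M_ge: "real M \<ge> x powr (1 - \<epsilon>) / 2" unfolding M_def using real_nat_floor_ge_half[OF xe1] .
  then have "ln (x powr (1 - \<epsilon>) / 2) \<le> ln (real M)" using xe1 by (subst ln_le_cancel_iff) auto
  then have W1: "(1 - 1/R) ^ (K+1) * ln (real M) ^ K \<le> W"
    unfolding W_def using assms M_ge by (intro sum_gen_mangoldt_div_ge) auto
  have "ln (x powr (1 - \<epsilon>) / 2) = (1 - \<epsilon>) * ln x - ln 2" using x_gt_1 by (simp add: ln_div ln_powr)
  then have "(1 - 2 * \<epsilon>) * ln x \<le> ln (real M)"
    using \<open>ln (x powr (1 - \<epsilon>) / 2) \<le> ln (real M)\<close> assms(4) by (simp add: algebra_simps)
  moreover have "0 \<le> (1 - 2 * \<epsilon>) * ln x" using assms(5) x_gt_1 by simp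
  ultimately have "((1 - 2 * \<epsilon>) * ln x) ^ K \<le> ln (real M) ^ K" by (rule power_mono)
  then have "(1 - 1/R) ^ (K+1) * ((1 - 2 * \<epsilon>) * ln x) ^ K \<le> (1 - 1/R) ^ (K+1) * ln (real M) ^ K"
    using assms(1) by (intro mult_left_mono) auto
  then have W2: "(1 - 1/R) ^ (K+1) * (1 - 2 * \<epsilon>) ^ K * ln x ^ K \<le> W"
    using W1 by (simp add: power_mult_distrib mult.assoc)
  have "1 - real (K+1) * (1/R) - real K * (2 * \<epsilon>) \<le> (1 - 1/R) ^ (K+1) * (1 - 2 * \<epsilon>) ^ K"
    using assms eps_pos by (intro one_minus_powers_ge) auto
  moreover have "real (K+1) * (1/R) = (real K + 1) / R" by simp
  ultimately have "1 - (real K + 1) / R - 2 * real K * \<epsilon> \<le> (1 - 1/R) ^ (K+1) * (1 - 2 * \<epsilon>) ^ K"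
    by linarith
  moreover have L: "ln x ^ K > 0" using x_gt_1 by simp
  ultimately have "(1 - (real K + 1) / R - 2 * real K * \<epsilon>) * ln x ^ K \<le> W"
    using W2 by (meson L less_imp_le mult_right_mono order.trans)
  then show ?thesis using L by (simp add: le_divide_eq)
qed

lemma sieve_comparison_explicit:
  fixes R :: real
  assumes "prime_pi x > 0" "R \<ge> 1" "R \<le> x powr (1 - \<epsilon>) / 2" "R * ln R \<le> ln (x powr (1 - \<epsilon>) / 2)"
    and "ln 2 \<le> \<epsilon> * ln x" "\<epsilon> \<le> 1/2"
  defines "A \<equiv> (2 * U) ^ K"
  shows "\<bar>real (prime_pi_set x P) / real (prime_pi x) - real (Psi_set x P) / x\<bar> \<le>
    (1 + A) * (error_EH / real (prime_pi x)) + 2 * A * ((real K + 1) / R + 2 * real K * \<epsilon>) +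
    2 * real K * (1 + ln x) / x powr (1/U) + (1 + A) * (x powr (1 - \<epsilon>) / x)"
proof -
  have A: "A \<ge> 0" unfolding A_def using U_ge_1 by simp
  have W: "2 * A * (1 - W / ln x ^ K) \<le> 2 * A * ((real K + 1) / R + 2 * real K * \<epsilon>)"
    using W_ge[OF assms(2-6)] A by (intro mult_left_mono) auto
  have "ln (real M) \<le> ln x" using M_bounds(1,3) by simp
  then have "2 * real K / z * (1 + ln (real M)) \<le> 2 * real K / z * (1 + ln x)"
    using z_gt_1 by (intro mult_left_mono) auto
  then have density: "2 * real K / z * (1 + ln (real M)) \<le> 2 * real K * (1 + ln x) / x powr (1/U)"
    unfolding z_def by simp
  have M: "(1 + A) * (real M / x) \<le> (1 + A) * (x powr (1 - \<epsilon>) / x)"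
    using M_bounds(2) x_gt_1 A by (intro mult_left_mono divide_right_mono) auto
  show ?thesis using sieve_comparison[OF assms(1)] W density M unfolding A_def by linarith
qed

end

lemma sieve_parameters:
  fixes A \<eta> :: real
  assumes "A \<ge> 1" "K \<ge> 1" "\<eta> > 0"
  obtains \<epsilon> R where "0 < \<epsilon>" "\<epsilon> \<le> 1/4" "R \<ge> 1"
    "2 * A * ((real K + 1) / R + 2 * real K * \<epsilon>) \<le> \<eta> / 2"
proof
  define \<epsilon> where "\<epsilon> = min (1/4) (\<eta> / (16 * A * real K))"
  define R where "R = 8 * A * (real K + 1) / \<eta> + 1"
  show "0 < \<epsilon>" "\<epsilon> \<le> 1/4" "R \<ge> 1" unfolding \<epsilon>_def R_def using assms by auto
  have "4 * A * real K * \<epsilon> \<le> 4 * A * real K * (\<eta> / (16 * A * real K))"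
    unfolding \<epsilon>_def using assms by (intro mult_left_mono) auto
  also have "\<dots> = \<eta> / 4" using assms by (simp add: field_simps)
  finally have eps: "4 * A * real K * \<epsilon> \<le> \<eta> / 4" .
  have "8 * A * (real K + 1) \<le> \<eta> * R" unfolding R_def using assms by (simp add: field_simps)
  then have "2 * A * ((real K + 1) / R) \<le> \<eta> / 4"
    using assms \<open>R \<ge> 1\<close> by (simp add: field_simps)
  moreover have "2 * A * ((real K + 1) / R + 2 * real K * \<epsilon>) = 2 * A * ((real K + 1) / R) + 4 * A * real K * \<epsilon>"
    by (simp add: algebra_simps)
  ultimately show "2 * A * ((real K + 1) / R + 2 * real K * \<epsilon>) \<le> \<eta> / 2"
    using eps by linarith
qed

lemma Psi_set_ge:
  assumes "x > 1" "U \<ge> 1" "U \<le> real K" "{p. prime p \<and> real p \<le> x powr (1/U)} \<subseteq> P"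
    and "ln (x powr (1/U)) \<ge> 70"
  shows "real (Psi_set x P) \<ge> smooth_density_bound (8 * K) * x"
proof -
  define z where "z = x powr (1/U)"
  have "smooth_upto z x \<subseteq> {n. 1 \<le> n \<and> real n \<le> x \<and> (\<forall>p. prime p \<longrightarrow> p dvd n \<longrightarrow> p \<in> P)}"
    using assms(4) unfolding smooth_upto_def z_def by auto
  moreover have "finite {n::nat. 1 \<le> n \<and> real n \<le> x \<and> (\<forall>p. prime p \<longrightarrow> p dvd n \<longrightarrow> p \<in> P)}"
    by (rule finite_subset[of _ "{1..nat \<lfloor>x\<rfloor>}"]) (auto intro: le_nat_floor)
  ultimately have "card (smooth_upto z x) \<le> Psi_set x P" unfolding Psi_set_def by (rule card_mono[rotated])
  moreover have "real (card (smooth_upto z x)) \<ge> smooth_density_bound (8 * K) * x"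
  proof (rule card_smooth_upto_ge)
    show "z > 0" "70 \<le> ln z" "1 \<le> x" using assms unfolding z_def by auto
    have "x powr 1 \<le> x powr ((real K + 1) / U)"
      using assms by (intro powr_mono) (auto simp: field_simps)
    also have "\<dots> = z powr ((real (8 * K) + 8) / 8)"
      unfolding z_def using assms by (simp add: powr_powr add_divide_distrib)
    finally show "x \<le> z powr ((real (8 * K) + 8) / 8)" using assms by simp
  qed
  ultimately show ?thesis by linarith
qed

lemma eventually_Psi_set_ge:
  assumes "U \<ge> 1"
  obtains c where "c > 0"
    "eventually (\<lambda>x. \<forall>P. {p. prime p \<and> real p \<le> x powr (1/U)} \<subseteq> P \<longrightarrow> real (Psi_set x P) \<ge> c * x) at_top"
proof
  define K where "K = nat \<lceil>U\<rceil>"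
  show "smooth_density_bound (8 * K) > 0" by (rule smooth_density_bound_pos)
  have "eventually (\<lambda>x. x > 1 \<and> ln (x powr (1/U)) \<ge> 70) at_top"
    using assms by (intro eventually_conj; real_asymp)
  then show "eventually (\<lambda>x. \<forall>P. {p. prime p \<and> real p \<le> x powr (1/U)} \<subseteq> P \<longrightarrow>
      real (Psi_set x P) \<ge> smooth_density_bound (8 * K) * x) at_top"
    by eventually_elim (use assms in \<open>auto intro!: Psi_set_ge simp: K_def\<close>)
qed

lemma prime_pi_pos: "x \<ge> 2 \<Longrightarrow> prime_pi x > 0"
  unfolding prime_pi_def by (subst card_gt_0_iff) (auto intro!: exI[of _ 2] finite_subset[OF _ finite_primes_upto] simp: primes_upto_def)

lemma eventually_prime_pi_set_close:
  fixes U \<eta> :: real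
  assumes EH: "\<And>\<epsilon>::real. \<epsilon> > 0 \<Longrightarrow>
     (\<lambda>x::real. \<Sum>d\<in>{1..nat \<lfloor>x powr (1 - \<epsilon>)\<rfloor>}.
         \<bar>real (prime_pi_ap x d) - real (prime_pi x) / real (totient d)\<bar>)
       \<in> o[at_top](\<lambda>x. real (prime_pi x))"
    and U: "U \<ge> 1" and \<eta>: "\<eta> > 0"
  shows "eventually (\<lambda>x. \<forall>P. {p. prime p \<and> real p \<le> x powr (1/U)} \<subseteq> P \<longrightarrow>
           \<bar>real (prime_pi_set x P) / real (prime_pi x) - real (Psi_set x P) / x\<bar> \<le> \<eta>) at_top"
proof -
  define K A where "K = nat \<lceil>U\<rceil>" and "A = (2 * U) ^ K"
  have K: "U \<le> real K" "K \<ge> 1" unfolding K_def using U by linarith+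
  have A: "A \<ge> 1" unfolding A_def using U by (intro one_le_power) auto
  obtain \<epsilon> R where \<epsilon>R: "0 < \<epsilon>" "\<epsilon> \<le> 1/4" "R \<ge> 1" "2 * A * ((real K + 1) / R + 2 * real K * \<epsilon>) \<le> \<eta> / 2"
    using sieve_parameters[OF A K(2) \<eta>] by blast
  define e where "e = \<eta> / (8 * (1 + A))"
  have "e > 0" unfolding e_def using A \<eta> by simp
  from landau_o.smallD[OF EH[OF \<epsilon>R(1)] this]
  have "eventually (\<lambda>x. (\<Sum>d\<in>{1..nat \<lfloor>x powr (1 - \<epsilon>)\<rfloor>}.
          \<bar>real (prime_pi_ap x d) - real (prime_pi x) / real (totient d)\<bar>) \<le> e * real (prime_pi x)) at_top"
    by (simp add: sum_nonneg)
  moreover have "eventually (\<lambda>x. 2 \<le> x \<and> 2 * real K \<le> x powr (1/U) \<and> R \<le> x powr (1 - \<epsilon>) / 2 \<and>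
      R * ln R \<le> ln (x powr (1 - \<epsilon>) / 2) \<and> ln 2 \<le> \<epsilon> * ln x \<and>
      2 * real K * (1 + ln x) / x powr (1/U) \<le> \<eta> / 8 \<and> (1 + A) * (x powr (1 - \<epsilon>) / x) \<le> \<eta> / 8) at_top"
    using U \<epsilon>R \<eta> A by (intro eventually_conj; real_asymp)
  ultimately show ?thesis
  proof eventually_elim
    case (elim x)
    show ?case
    proof (intro allI impI)
      fix P assume P: "{p. prime p \<and> real p \<le> x powr (1/U)} \<subseteq> P"
      interpret sieve_setting x U \<epsilon> K P
        using elim P K U \<epsilon>R by unfold_locales auto
      have pi: "prime_pi x > 0" using elim by (intro prime_pi_pos) auto
      have "(1 + A) * (error_EH / real (prime_pi x)) \<le> (1 + A) * e"
        using elim pi A unfolding error_EH_def M_def by (intro mult_left_mono) (auto simp: divide_le_eq)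
      also have "\<dots> = \<eta> / 8" unfolding e_def using A by (simp add: field_simps)
      finally have "(1 + A) * (error_EH / real (prime_pi x)) \<le> \<eta> / 8" .
      moreover have "\<bar>real (prime_pi_set x P) / real (prime_pi x) - real (Psi_set x P) / x\<bar> \<le>
          (1 + A) * (error_EH / real (prime_pi x)) + 2 * A * ((real K + 1) / R + 2 * real K * \<epsilon>) +
          2 * real K * (1 + ln x) / x powr (1/U) + (1 + A) * (x powr (1 - \<epsilon>) / x)"
        using sieve_comparison_explicit[OF pi \<epsilon>R(3)] elim \<epsilon>R unfolding A_def by auto
      ultimately show "\<bar>real (prime_pi_set x P) / real (prime_pi x) - real (Psi_set x P) / x\<bar> \<le> \<eta>"
        using elim \<epsilon>R \<eta> by linarith
    qed
  qed
qed

lemma small_primes_subset_antimono: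
  assumes "x \<ge> 1" "1 \<le> u" "u \<le> U"
  shows "{p. prime p \<and> real p \<le> x powr (1/U)} \<subseteq> {p. prime p \<and> real p \<le> x powr (1/u)}"
proof -
  have "x powr (1/U) \<le> x powr (1/u)" using assms by (intro powr_mono) (auto simp: field_simps)
  then show ?thesis by auto
qed

lemma abs_divide_minus_one_le:
  fixes a b c \<delta> :: real
  assumes "c > 0" "b \<ge> c" "\<bar>a - b\<bar> \<le> \<delta> * c"
  shows "\<bar>a / b - 1\<bar> \<le> \<delta>"
proof -
  have "\<bar>a / b - 1\<bar> = \<bar>a - b\<bar> / b" using assms by (simp add: field_simps)
  also have "\<dots> \<le> \<delta> * c / c" using assms by (intro frac_le) auto
  finally show ?thesis using assms by simp
qed

lemma eventually_relative_error_le: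
  fixes U \<delta> :: real
  assumes EH: "\<And>\<epsilon>::real. \<epsilon> > 0 \<Longrightarrow>
     (\<lambda>x::real. \<Sum>d\<in>{1..nat \<lfloor>x powr (1 - \<epsilon>)\<rfloor>}.
         \<bar>real (prime_pi_ap x d) - real (prime_pi x) / real (totient d)\<bar>)
       \<in> o[at_top](\<lambda>x. real (prime_pi x))"
    and U: "U \<ge> 1" and "\<delta> > 0"
  shows "eventually (\<lambda>x. \<forall>P. {p. prime p \<and> real p \<le> x powr (1/U)} \<subseteq> P \<longrightarrow>
           \<bar>(real (prime_pi_set x P) / real (prime_pi x)) / (real (Psi_set x P) / x) - 1\<bar> \<le> \<delta>) at_top"
proof -
  obtain c where c: "c > 0" and Psi: "eventually (\<lambda>x. \<forall>P. {p. prime p \<and> real p \<le> x powr (1/U)} \<subseteq> P \<longrightarrow>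
      real (Psi_set x P) \<ge> c * x) at_top"
    using eventually_Psi_set_ge[OF U] by blast
  have "eventually (\<lambda>x. \<forall>P. {p. prime p \<and> real p \<le> x powr (1/U)} \<subseteq> P \<longrightarrow>
      \<bar>real (prime_pi_set x P) / real (prime_pi x) - real (Psi_set x P) / x\<bar> \<le> \<delta> * c) at_top"
    using \<open>\<delta> > 0\<close> c by (intro eventually_prime_pi_set_close[OF EH U] mult_pos_pos)
  with Psi eventually_gt_at_top[of "0::real"] show ?thesis
  proof eventually_elim
    case (elim x)
    then have "c \<le> real (Psi_set x P) / x" if "{p. prime p \<and> real p \<le> x powr (1/U)} \<subseteq> P" for P
      using that by (simp add: le_divide_eq)
    with elim c show ?case by (blast intro: abs_divide_minus_one_le)
  qed
qed

theorem lemma2p1: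
  fixes U :: real
  assumes EH: "\<And>\<epsilon>::real. \<epsilon> > 0 \<Longrightarrow>
     (\<lambda>x::real. \<Sum>d\<in>{1..nat \<lfloor>x powr (1 - \<epsilon>)\<rfloor>}.
         \<bar>real (prime_pi_ap x d) - real (prime_pi x) / real (totient d)\<bar>)
       \<in> o[at_top](\<lambda>x. real (prime_pi x))"
    and U: "U \<ge> 1"
  shows "\<forall>\<delta>>0. \<exists>X. \<forall>x\<ge>X. \<forall>u::real. \<forall>P::nat set.
           1 \<le> u \<and> u \<le> U \<and>
           (\<forall>p\<in>P. prime p \<and> real p < x) \<and>
           {p::nat. prime p \<and> real p \<le> x powr (1 / u)} \<subseteq> P \<longrightarrow>
           \<bar>(real (prime_pi_set x P) / real (prime_pi x))
              / (real (Psi_set x P) / x) - 1\<bar> \<le> \<delta>"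
proof -
  have "eventually (\<lambda>x. 1 \<le> x \<and> (\<forall>P. {p. prime p \<and> real p \<le> x powr (1/U)} \<subseteq> P \<longrightarrow>
      \<bar>(real (prime_pi_set x P) / real (prime_pi x)) / (real (Psi_set x P) / x) - 1\<bar> \<le> \<delta>)) at_top"
    if "\<delta> > 0" for \<delta>
    using eventually_ge_at_top eventually_relative_error_le[OF EH U that] by (rule eventually_conj)
  then show ?thesis
    unfolding eventually_at_top_linorder using small_primes_subset_antimono by (meson subset_trans)
qed

end
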